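(* Let $\mathcal{C}$ be an idempotent Mal'cev clone on $\{0,1,2\}$ that contains a majority operation and preserves none of $\mu_0,\mu_1,\mu_2$ and $\varphi$. Then $\mathcal{C}\equiv_{\mathrm{m}}\mathcal{C}_2$ or $\mathcal{C}\equiv_{\mathrm{m}}\mathcal{I}_2$.
   Context: A clone is idempotent if $f(x,\dots,x)\approx x$ for all its operations; Mal'cev if it contains $d$ with $d(y,x,x)\approx d(x,x,y)\approx y$; a majority operation satisfies $m(x,y,y)\approx m(y,x,y)\approx m(y,y,x)\approx y$. $\mu_i$ is the equivalence relation on $\{0,1,2\}$ with classes $\{i\}$ and $\{0,1,2\}\setminus\{i\}$; $\varphi=\{(0,1),(1,2),(2,0)\}$. $\mathcal{C}_2=\mathrm{Pol}(\{0,1\};\neq,\{0\},\{1\})$ and $\mathcal{I}_2=\mathrm{Pol}(\{0,1\};\{0\},\{1\})$, where $\mathrm{Pol}(\Gamma)$ is the clone of operations preserving all relations of $\Gamma$. For an $n$-ary $f$ and $\sigma\colon[n]\to[r]$, $f_\sigma(x_1,\dots,x_r)=f(x_{\sigma(1)},\dots,x_{\sigma(n)})$; a minion homomorphism is an arity-preserving map $\xi$ between clones with $\xi(f_\sigma)=\xi(f)_\sigma$; $\mathcal{C}\equiv_{\mathrm{m}}\mathcal{D}$ means there are minion homomorphisms in both directions. *)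

theory Defs
  imports Main
begin

text \<open>Finitary operations on a carrier A: an operation is a pair (n, f) with arity n \<ge> 1
  and f applied to argument lists of length n over A; f is normalised to undefined elsewhere.\<close>

type_synonym 'a operation = "nat \<times> ('a list \<Rightarrow> 'a)"
type_synonym 'a relation = "nat \<times> 'a list set"

definition ext_on :: "'a set \<Rightarrow> nat \<Rightarrow> ('a list \<Rightarrow> 'a) \<Rightarrow> 'a list \<Rightarrow> 'a" where
  "ext_on A n h = (\<lambda>xs. if length xs = n \<and> set xs \<subseteq> A then h xs else undefined)"

definition ops :: "'a set \<Rightarrow> 'a operation set" where
  "ops A = {f. fst f \<ge> 1 \<and> (\<forall>xs. length xs = fst f \<and> set xs \<subseteq> A \<longrightarrow> snd f xs \<in> A)
              \<and> ext_on A (fst f) (snd f) = snd f}"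

definition proj :: "'a set \<Rightarrow> nat \<Rightarrow> nat \<Rightarrow> 'a operation" where
  "proj A n i = (n, ext_on A n (\<lambda>xs. xs ! i))"

definition comp_op :: "'a set \<Rightarrow> 'a operation \<Rightarrow> nat \<Rightarrow> (nat \<Rightarrow> 'a operation) \<Rightarrow> 'a operation" where
  "comp_op A f m gs = (m, ext_on A m (\<lambda>xs. snd f (map (\<lambda>i. snd (gs i) xs) [0..<fst f])))"

definition clone :: "'a set \<Rightarrow> 'a operation set \<Rightarrow> bool" where
  "clone A C \<longleftrightarrow> C \<subseteq> ops A
     \<and> (\<forall>n i. 1 \<le> n \<and> i < n \<longrightarrow> proj A n i \<in> C)
     \<and> (\<forall>f\<in>C. \<forall>m gs. 1 \<le> m \<and> (\<forall>i<fst f. gs i \<in> C \<and> fst (gs i) = m) \<longrightarrow> comp_op A f m gs \<in> C)"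

definition preserves :: "'a operation \<Rightarrow> 'a relation \<Rightarrow> bool" where
  "preserves f \<rho> \<longleftrightarrow> (\<forall>cols. (\<forall>j<fst f. cols j \<in> snd \<rho>) \<longrightarrow>
      map (\<lambda>i. snd f (map (\<lambda>j. cols j ! i) [0..<fst f])) [0..<fst \<rho>] \<in> snd \<rho>)"

definition Pol :: "'a set \<Rightarrow> 'a relation set \<Rightarrow> 'a operation set" where
  "Pol A \<Gamma> = {f \<in> ops A. \<forall>\<rho>\<in>\<Gamma>. preserves f \<rho>}"

definition clone_preserves :: "'a operation set \<Rightarrow> 'a relation \<Rightarrow> bool" where
  "clone_preserves C \<rho> \<longleftrightarrow> (\<forall>f\<in>C. preserves f \<rho>)"

definition idempotent_clone :: "'a set \<Rightarrow> 'a operation set \<Rightarrow> bool" where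
  "idempotent_clone A C \<longleftrightarrow> (\<forall>f\<in>C. \<forall>x\<in>A. snd f (replicate (fst f) x) = x)"

definition malcev_clone :: "'a set \<Rightarrow> 'a operation set \<Rightarrow> bool" where
  "malcev_clone A C \<longleftrightarrow> (\<exists>d\<in>C. fst d = 3 \<and>
      (\<forall>x\<in>A. \<forall>y\<in>A. snd d [y,x,x] = y \<and> snd d [x,x,y] = y))"

definition has_majority :: "'a set \<Rightarrow> 'a operation set \<Rightarrow> bool" where
  "has_majority A C \<longleftrightarrow> (\<exists>m\<in>C. fst m = 3 \<and>
      (\<forall>x\<in>A. \<forall>y\<in>A. snd m [x,y,y] = y \<and> snd m [y,x,y] = y \<and> snd m [y,y,x] = y))"

text \<open>Minor f_sigma for sigma : [n] -> [r] (indices 0-based).\<close>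
definition minor :: "'a set \<Rightarrow> 'a operation \<Rightarrow> nat \<Rightarrow> (nat \<Rightarrow> nat) \<Rightarrow> 'a operation" where
  "minor A f r \<sigma> = (r, ext_on A r (\<lambda>xs. snd f (map (\<lambda>i. xs ! \<sigma> i) [0..<fst f])))"

definition minion_hom :: "'a set \<Rightarrow> 'b set \<Rightarrow> 'a operation set \<Rightarrow> 'b operation set
    \<Rightarrow> ('a operation \<Rightarrow> 'b operation) \<Rightarrow> bool" where
  "minion_hom A B C D \<xi> \<longleftrightarrow>
     (\<forall>f\<in>C. \<xi> f \<in> D \<and> fst (\<xi> f) = fst f)
   \<and> (\<forall>f\<in>C. \<forall>r \<sigma>. 1 \<le> r \<and> (\<forall>i<fst f. \<sigma> i < r) \<longrightarrow> \<xi> (minor A f r \<sigma>) = minor B (\<xi> f) r \<sigma>)"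

definition minion_equiv :: "'a set \<Rightarrow> 'b set \<Rightarrow> 'a operation set \<Rightarrow> 'b operation set \<Rightarrow> bool" where
  "minion_equiv A B C D \<longleftrightarrow> (\<exists>\<xi>. minion_hom A B C D \<xi>) \<and> (\<exists>\<xi>. minion_hom B A D C \<xi>)"

definition A3 :: "nat set" where "A3 = {0,1,2}"
definition A2 :: "nat set" where "A2 = {0,1}"

definition mu :: "nat \<Rightarrow> nat relation" where
  "mu i = (2, {[x,y] | x y. x \<in> A3 \<and> y \<in> A3 \<and> (x = i \<longleftrightarrow> y = i)})"

definition phi :: "nat relation" where
  "phi = (2, {[0,1],[1,2],[2,0]})"

definition C2 :: "nat operation set" where
  "C2 = Pol A2 {(2, {[0,1],[1,0]}), (1, {[0]}), (1, {[1]})}"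

definition I2 :: "nat operation set" where
  "I2 = Pol A2 {(1, {[0]}), (1, {[1]})}"

end

(*
  By the Baker-Pixley theorem, the majority operation makes C the set of all operations that
  preserve the binary invariant relations of C.  The Mal'cev operation makes these relations
  rectangular, and since neither phi nor any mu_i is invariant, every binary invariant relation is a
  product of subuniverses, a bijection between two-element subuniverses, the identity, or one of
  the transpositions of {0,1,2}; at most one transposition is invariant, since two of them would
  compose to phi or its converse.

  If some two-element set {p,q} carries an invariant swap, restricting operations to {p,q} is a
  minion homomorphism C -> C2; conversely, coding {0,1,2} into {0,1}^2 so that the invariant
  transposition (if any) becomes Boolean negation lets self-dual idempotent Boolean operations act
  on {0,1,2} preserving all binary invariants, which gives C2 -> C.  Otherwise restriction to
  {0,1} gives C -> I2, and C contains a binary operation that is commutative on every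
  two-element subuniverse; coding {0,1,2} by the characteristic vectors of its six nonempty
  proper subsets, and decoding the mixed patterns on {p,q} with that operation, gives I2 -> C.
*)
theory Submission
  imports Defs
begin

lemma A2_iff: "x \<in> A2 \<longleftrightarrow> x = 0 \<or> x = 1"
  by (auto simp: A2_def)

lemma A3_iff: "x \<in> A3 \<longleftrightarrow> x = 0 \<or> x = 1 \<or> x = 2"
  by (auto simp: A3_def)

lemma ext_on_cong:
  "(\<And>xs. length xs = n \<Longrightarrow> set xs \<subseteq> A \<Longrightarrow> h xs = g xs) \<Longrightarrow> ext_on A n h = ext_on A n g"
  by (auto simp: ext_on_def fun_eq_iff)

lemma ext_on_idem: "ext_on A n (ext_on A n h) = ext_on A n h"
  by (auto simp: ext_on_def fun_eq_iff)

lemma ops_arity_pos: "f \<in> ops A \<Longrightarrow> 1 \<le> fst f"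
  by (simp add: ops_def)

lemma ops_closed: "f \<in> ops A \<Longrightarrow> length xs = fst f \<Longrightarrow> set xs \<subseteq> A \<Longrightarrow> snd f xs \<in> A"
  by (simp add: ops_def)

lemma ops_eqI:
  assumes "f \<in> ops A" "g \<in> ops A" "fst f = fst g"
    and "\<And>xs. length xs = fst f \<Longrightarrow> set xs \<subseteq> A \<Longrightarrow> snd f xs = snd g xs"
  shows "f = g"
proof -
  have "snd f = ext_on A (fst f) (snd f)" using assms(1) by (simp add: ops_def)
  also have "\<dots> = ext_on A (fst f) (snd g)" by (rule ext_on_cong) (use assms(4) in auto)
  also have "\<dots> = snd g" using assms(2,3) by (simp add: ops_def)
  finally show ?thesis using assms(3) by (simp add: prod_eq_iff)
qed

lemma fst_proj [simp]: "fst (proj A n i) = n"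
  by (simp add: proj_def)

lemma snd_proj: "length xs = n \<Longrightarrow> set xs \<subseteq> A \<Longrightarrow> snd (proj A n i) xs = xs ! i"
  by (simp add: proj_def ext_on_def)

lemma fst_comp_op [simp]: "fst (comp_op A f m gs) = m"
  by (simp add: comp_op_def)

lemma snd_comp_op: "length xs = m \<Longrightarrow> set xs \<subseteq> A \<Longrightarrow>
   snd (comp_op A f m gs) xs = snd f (map (\<lambda>i. snd (gs i) xs) [0..<fst f])"
  by (simp add: comp_op_def ext_on_def)

lemma fst_minor [simp]: "fst (minor A f r \<sigma>) = r"
  by (simp add: minor_def)

lemma snd_minor: "length xs = r \<Longrightarrow> set xs \<subseteq> A \<Longrightarrow>
   snd (minor A f r \<sigma>) xs = snd f (map (\<lambda>i. xs ! \<sigma> i) [0..<fst f])"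
  by (simp add: minor_def ext_on_def)

lemma clone_ops: "clone A C \<Longrightarrow> f \<in> C \<Longrightarrow> f \<in> ops A"
  by (auto simp: clone_def)

lemma clone_proj: "clone A C \<Longrightarrow> 1 \<le> n \<Longrightarrow> i < n \<Longrightarrow> proj A n i \<in> C"
  by (auto simp: clone_def)

lemma clone_comp:
  "clone A C \<Longrightarrow> f \<in> C \<Longrightarrow> 1 \<le> m \<Longrightarrow> (\<And>i. i < fst f \<Longrightarrow> gs i \<in> C \<and> fst (gs i) = m)
   \<Longrightarrow> comp_op A f m gs \<in> C"
  unfolding clone_def by blast

lemma minor_eq_comp_op: "minor A f r \<sigma> = comp_op A f r (\<lambda>i. proj A r (\<sigma> i))"
  unfolding minor_def comp_op_def by (auto intro!: ext_on_cong simp: snd_proj)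

lemma clone_minor:
  assumes "clone A C" "f \<in> C" "1 \<le> r" "\<And>i. i < fst f \<Longrightarrow> \<sigma> i < r"
  shows "minor A f r \<sigma> \<in> C"
  unfolding minor_eq_comp_op using assms by (auto intro!: clone_comp clone_proj)

lemma clone_closed:
  "clone A C \<Longrightarrow> c \<in> C \<Longrightarrow> length xs = fst c \<Longrightarrow> set xs \<subseteq> A \<Longrightarrow> snd c xs \<in> A"
  using clone_ops ops_closed by blast

section \<open>Binary invariant relations\<close>

definition preserves_brel :: "'a operation \<Rightarrow> ('a \<times> 'a) set \<Rightarrow> bool" where
  "preserves_brel c R \<longleftrightarrow> (\<forall>xs ys. length xs = fst c \<longrightarrow> list_all2 (\<lambda>x y. (x, y) \<in> R) xs ys
      \<longrightarrow> (snd c xs, snd c ys) \<in> R)"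

definition inv_brel :: "'a set \<Rightarrow> 'a operation set \<Rightarrow> ('a \<times> 'a) set \<Rightarrow> bool" where
  "inv_brel A C R \<longleftrightarrow> R \<subseteq> A \<times> A \<and> (\<forall>c\<in>C. preserves_brel c R)"

definition subuniverse :: "'a set \<Rightarrow> 'a operation set \<Rightarrow> 'a set \<Rightarrow> bool" where
  "subuniverse A C U \<longleftrightarrow> U \<subseteq> A \<and> (\<forall>c\<in>C. \<forall>xs. length xs = fst c \<longrightarrow> set xs \<subseteq> U \<longrightarrow> snd c xs \<in> U)"

lemma inv_brel_subset: "inv_brel A C R \<Longrightarrow> R \<subseteq> A \<times> A"
  by (simp add: inv_brel_def)

lemma inv_brelD:
  "inv_brel A C R \<Longrightarrow> c \<in> C \<Longrightarrow> length xs = fst c \<Longrightarrow> list_all2 (\<lambda>x y. (x, y) \<in> R) xs ys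
   \<Longrightarrow> (snd c xs, snd c ys) \<in> R"
  unfolding inv_brel_def preserves_brel_def by blast

lemma subuniverseD: "subuniverse A C U \<Longrightarrow> c \<in> C \<Longrightarrow> length xs = fst c \<Longrightarrow> set xs \<subseteq> U \<Longrightarrow> snd c xs \<in> U"
  unfolding subuniverse_def by blast

lemma preserves_pair_rel_iff: "preserves f (2, {[x, y] | x y. (x, y) \<in> R}) \<longleftrightarrow> preserves_brel f R"
proof -
  have "preserves f (2, {[x, y] | x y. (x, y) \<in> R}) \<longleftrightarrow>
    (\<forall>cols. (\<forall>j<fst f. \<exists>x y. cols j = [x, y] \<and> (x, y) \<in> R) \<longrightarrow>
       (snd f (map (\<lambda>j. cols j ! 0) [0..<fst f]), snd f (map (\<lambda>j. cols j ! 1) [0..<fst f])) \<in> R)"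
    by (simp add: preserves_def upt_rec)
  also have "\<dots> \<longleftrightarrow> preserves_brel f R"
    unfolding preserves_brel_def
  proof safe
    fix xs ys assume p: "\<forall>cols. (\<forall>j<fst f. \<exists>x y. cols j = [x, y] \<and> (x, y) \<in> R) \<longrightarrow>
       (snd f (map (\<lambda>j. cols j ! 0) [0..<fst f]), snd f (map (\<lambda>j. cols j ! 1) [0..<fst f])) \<in> R"
      and l: "length xs = fst f" and col: "list_all2 (\<lambda>x y. (x, y) \<in> R) xs ys"
    have "map (\<lambda>j. [xs ! j, ys ! j] ! 0) [0..<fst f] = xs" "map (\<lambda>j. [xs ! j, ys ! j] ! 1) [0..<fst f] = ys"
      using l col by (auto simp: list_all2_conv_all_nth intro: nth_equalityI)
    moreover have "\<forall>j<fst f. \<exists>x y. [xs ! j, ys ! j] = [x, y] \<and> (x, y) \<in> R"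
      using l col by (simp add: list_all2_conv_all_nth)
    ultimately show "(snd f xs, snd f ys) \<in> R" using p[rule_format, of "\<lambda>j. [xs ! j, ys ! j]"] by simp
  next
    fix cols assume p: "\<forall>xs ys. length xs = fst f \<longrightarrow> list_all2 (\<lambda>x y. (x, y) \<in> R) xs ys \<longrightarrow> (snd f xs, snd f ys) \<in> R"
      and col: "\<forall>j<fst f. \<exists>x y. cols j = [x, y] \<and> (x, y) \<in> R"
    have "list_all2 (\<lambda>x y. (x, y) \<in> R) (map (\<lambda>j. cols j ! 0) [0..<fst f]) (map (\<lambda>j. cols j ! 1) [0..<fst f])"
      using col by (auto simp: list_all2_conv_all_nth)
    then show "(snd f (map (\<lambda>j. cols j ! 0) [0..<fst f]), snd f (map (\<lambda>j. cols j ! 1) [0..<fst f])) \<in> R"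
      using p by simp
  qed
  finally show ?thesis .
qed

lemma clone_preserves_pair_rel:
  "inv_brel A C R \<Longrightarrow> clone_preserves C (2, {[x, y] | x y. (x, y) \<in> R})"
  by (simp add: clone_preserves_def preserves_pair_rel_iff inv_brel_def)

lemma list_all2_set_Domain_Range:
  "list_all2 (\<lambda>x y. (x, y) \<in> R) xs ys \<Longrightarrow> set xs \<subseteq> Domain R \<and> set ys \<subseteq> Range R"
  by (induction rule: list_all2_induct) auto

lemma list_all2_graph:
  "list_all2 (\<lambda>x y. (x, y) \<in> R) xs ys \<Longrightarrow> (\<And>x y. (x, y) \<in> R \<Longrightarrow> y = h x) \<Longrightarrow> ys = map h xs"
  by (induction rule: list_all2_induct) auto

lemma inv_brel_converse: "inv_brel A C R \<Longrightarrow> inv_brel A C (R\<inverse>)"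
  unfolding inv_brel_def preserves_brel_def
  by (auto simp: list_all2_conv_all_nth)

lemma inv_brel_Int: "inv_brel A C R \<Longrightarrow> inv_brel A C S \<Longrightarrow> inv_brel A C (R \<inter> S)"
  unfolding inv_brel_def preserves_brel_def
  by (auto simp: list_all2_conv_all_nth)

lemma inv_brel_relcomp:
  assumes R: "inv_brel A C R" and S: "inv_brel A C S"
  shows "inv_brel A C (R O S)"
  unfolding inv_brel_def preserves_brel_def
proof (intro conjI ballI allI impI)
  show "R O S \<subseteq> A \<times> A" using R S unfolding inv_brel_def by auto
next
  fix c xs zs assume c: "c \<in> C" and l: "length xs = fst c" and col: "list_all2 (\<lambda>x z. (x, z) \<in> R O S) xs zs"
  have "(\<lambda>x z. (x, z) \<in> R O S) = (\<lambda>x y. (x, y) \<in> R) OO (\<lambda>y z. (y, z) \<in> S)"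
    by (auto simp: fun_eq_iff)
  then have "list_all2 ((\<lambda>x y. (x, y) \<in> R) OO (\<lambda>y z. (y, z) \<in> S)) xs zs"
    using col by simp
  then obtain ys where xy: "list_all2 (\<lambda>x y. (x, y) \<in> R) xs ys" and yz: "list_all2 (\<lambda>y z. (y, z) \<in> S) ys zs"
    by (auto simp: list.rel_compp)
  have "length ys = fst c" using xy l by (auto dest: list_all2_lengthD)
  then show "(snd c xs, snd c zs) \<in> R O S"
    using inv_brelD[OF R c l xy] inv_brelD[OF S c _ yz] by blast
qed

lemma subuniverse_Domain:
  assumes R: "inv_brel A C R"
  shows "subuniverse A C (Domain R)"
  unfolding subuniverse_def
proof (intro conjI ballI allI impI)
  show "Domain R \<subseteq> A" using inv_brel_subset[OF R] by auto
  fix c xs assume c: "c \<in> C" and l: "length xs = fst c" and s: "set xs \<subseteq> Domain R"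
  let ?ys = "map (\<lambda>x. SOME y. (x, y) \<in> R) xs"
  have "list_all2 (\<lambda>x y. (x, y) \<in> R) xs ?ys"
    using s by (auto simp: list_all2_map2 list_all2_same intro: someI)
  then show "snd c xs \<in> Domain R" using inv_brelD[OF R c l] by blast
qed

lemma subuniverse_Range: "inv_brel A C R \<Longrightarrow> subuniverse A C (Range R)"
  using subuniverse_Domain[OF inv_brel_converse] by fastforce

lemma inv_brel_Times:
  assumes U: "subuniverse A C U" and V: "subuniverse A C V"
  shows "inv_brel A C (U \<times> V)"
  unfolding inv_brel_def preserves_brel_def
proof (intro conjI ballI allI impI)
  show "U \<times> V \<subseteq> A \<times> A" using U V unfolding subuniverse_def by auto
  fix c xs ys assume c: "c \<in> C" and l: "length xs = fst c" and col: "list_all2 (\<lambda>x y. (x, y) \<in> U \<times> V) xs ys"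
  have "set xs \<subseteq> U" "set ys \<subseteq> V" "length ys = fst c"
    using l col by (auto simp: list_all2_conv_all_nth set_conv_nth)
  then show "(snd c xs, snd c ys) \<in> U \<times> V" using subuniverseD[OF U c l] subuniverseD[OF V c] by auto
qed

lemma subuniverse_carrier: "clone A C \<Longrightarrow> subuniverse A C A"
  unfolding subuniverse_def using clone_closed by blast

lemma subuniverse_Image:
  assumes cl: "clone A C" and U: "subuniverse A C U" and R: "inv_brel A C R"
  shows "subuniverse A C (R `` U)"
proof -
  have "R `` U = Range (R \<inter> U \<times> A)" using inv_brel_subset[OF R] by auto
  then show ?thesis
    using subuniverse_Range[OF inv_brel_Int[OF R inv_brel_Times[OF U subuniverse_carrier[OF cl]]]] by simp
qed

lemma inv_brel_rectangular:
  assumes mal: "malcev_clone A C" and R: "inv_brel A C R"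
    and "(x, y) \<in> R" "(x', y) \<in> R" "(x', y') \<in> R"
  shows "(x, y') \<in> R"
proof -
  obtain d where d: "d \<in> C" "fst d = 3" and dm: "\<And>x y. x \<in> A \<Longrightarrow> y \<in> A \<Longrightarrow> snd d [y,x,x] = y \<and> snd d [x,x,y] = y"
    using mal unfolding malcev_clone_def by blast
  have "x \<in> A" "x' \<in> A" "y \<in> A" "y' \<in> A" using assms(3-5) inv_brel_subset[OF R] by auto
  moreover have "(snd d [x,x',x'], snd d [y,y,y']) \<in> R"
    by (rule inv_brelD[OF R d(1)]) (use assms(3-5) d(2) in auto)
  ultimately show ?thesis using dm by simp
qed

section \<open>The Baker-Pixley theorem\<close>

lemma majority_vote:
  assumes cl: "clone A C" and m: "m \<in> C" "fst m = 3"
    and maj: "\<And>x y. x \<in> A \<Longrightarrow> y \<in> A \<Longrightarrow> snd m [x,y,y] = y \<and> snd m [y,x,y] = y \<and> snd m [y,y,x] = y"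
    and g: "g \<in> ops A" and V: "\<And>v. v \<in> V \<Longrightarrow> length v = fst g \<and> set v \<subseteq> A"
    and c: "c1 \<in> C" "fst c1 = fst g" "c2 \<in> C" "fst c2 = fst g" "c3 \<in> C" "fst c3 = fst g"
    and two: "\<And>v. v \<in> V \<Longrightarrow> (snd c1 v = snd g v \<and> snd c2 v = snd g v)
       \<or> (snd c1 v = snd g v \<and> snd c3 v = snd g v) \<or> (snd c2 v = snd g v \<and> snd c3 v = snd g v)"
  shows "\<exists>c\<in>C. fst c = fst g \<and> (\<forall>v\<in>V. snd c v = snd g v)"
proof (intro bexI conjI ballI)
  show "comp_op A m (fst g) ((!) [c1, c2, c3]) \<in> C"
    by (rule clone_comp[OF cl m(1) ops_arity_pos[OF g]]) (use c m(2) in \<open>auto simp: less_Suc_eq numeral_3_eq_3\<close>)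
  fix v assume v: "v \<in> V"
  have "snd (comp_op A m (fst g) ((!) [c1, c2, c3])) v = snd m [snd c1 v, snd c2 v, snd c3 v]"
    using V[OF v] m(2) by (simp add: snd_comp_op upt_rec numeral_eq_Suc)
  moreover have "snd c1 v \<in> A" "snd c2 v \<in> A" "snd c3 v \<in> A" "snd g v \<in> A"
    using V[OF v] c clone_closed[OF cl] ops_closed[OF g] by auto
  ultimately show "snd (comp_op A m (fst g) ((!) [c1, c2, c3])) v = snd g v"
    using two[OF v] maj by auto
qed simp

lemma majority_interpolation_finite:
  assumes cl: "clone A C" and m: "m \<in> C" "fst m = 3"
    and maj: "\<And>x y. x \<in> A \<Longrightarrow> y \<in> A \<Longrightarrow> snd m [x,y,y] = y \<and> snd m [y,x,y] = y \<and> snd m [y,y,x] = y"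
    and g: "g \<in> ops A" and T: "\<And>v. v \<in> T \<Longrightarrow> length v = fst g \<and> set v \<subseteq> A"
    and two: "\<And>s t. s \<in> T \<Longrightarrow> t \<in> T \<Longrightarrow> \<exists>c\<in>C. fst c = fst g \<and> snd c s = snd g s \<and> snd c t = snd g t"
    and S: "finite S" "S \<subseteq> T"
  shows "s \<in> T \<Longrightarrow> t \<in> T \<Longrightarrow> \<exists>c\<in>C. fst c = fst g \<and> (\<forall>v\<in>S \<union> {s, t}. snd c v = snd g v)"
  using S
proof (induction S arbitrary: s t rule: finite_induct)
  case empty
  then show ?case using two by auto
next
  case (insert u S)
  have u: "u \<in> T" and S: "S \<subseteq> T" using insert.prems by auto
  obtain c1 where c1: "c1 \<in> C" "fst c1 = fst g" "\<forall>v\<in>S \<union> {s, t}. snd c1 v = snd g v"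
    using insert.IH[OF _ _ S] insert.prems by blast
  obtain c2 where c2: "c2 \<in> C" "fst c2 = fst g" "\<forall>v\<in>S \<union> {u, t}. snd c2 v = snd g v"
    using insert.IH[OF u _ S] insert.prems by blast
  obtain c3 where c3: "c3 \<in> C" "fst c3 = fst g" "\<forall>v\<in>S \<union> {u, s}. snd c3 v = snd g v"
    using insert.IH[OF u _ S] insert.prems by blast
  show ?case
    by (rule majority_vote[OF cl m maj g _ c1(1,2) c2(1,2) c3(1,2)])
      (use u S insert.prems T c1(3) c2(3) c3(3) in auto)
qed

lemma majority_interpolation:
  assumes cl: "clone A C" and fin: "finite A" and maj: "has_majority A C" and g: "g \<in> ops A"
    and two: "\<And>x y. length x = fst g \<Longrightarrow> set x \<subseteq> A \<Longrightarrow> length y = fst g \<Longrightarrow> set y \<subseteq> A \<Longrightarrow>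
         \<exists>c\<in>C. fst c = fst g \<and> snd c x = snd g x \<and> snd c y = snd g y"
  shows "g \<in> C"
proof -
  obtain m where m: "m \<in> C" "fst m = 3"
    and m_maj: "\<And>x y. x \<in> A \<Longrightarrow> y \<in> A \<Longrightarrow> snd m [x,y,y] = y \<and> snd m [y,x,y] = y \<and> snd m [y,y,x] = y"
    using maj unfolding has_majority_def by blast
  define T where "T = {xs. length xs = fst g \<and> set xs \<subseteq> A}"
  have n: "1 \<le> fst g" using g by (rule ops_arity_pos)
  have "finite T"
    unfolding T_def using finite_lists_length_eq[OF fin, of "fst g"] by (simp add: conj_commute)
  then obtain c where c: "c \<in> C" "fst c = fst g" "\<forall>v\<in>T. snd c v = snd g v"
  proof (cases "T = {}")
    case True
    then show ?thesis using that[of "proj A (fst g) 0"] clone_proj[OF cl n] n by simp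
  next
    case False
    then obtain s where "s \<in> T" by blast
    then show ?thesis
      using majority_interpolation_finite[OF cl m m_maj g _ two \<open>finite T\<close> order_refl, of s s] that
      unfolding T_def by blast
  qed
  have "c = g"
    by (rule ops_eqI[OF clone_ops[OF cl c(1)] g]) (use c T_def in auto)
  then show ?thesis using c(1) by simp
qed

definition generated_brel :: "'a operation set \<Rightarrow> 'a list \<Rightarrow> 'a list \<Rightarrow> ('a \<times> 'a) set" where
  "generated_brel C x y = (\<lambda>c. (snd c x, snd c y)) ` {c \<in> C. fst c = length x}"

lemma inv_brel_generated_brel:
  assumes cl: "clone A C" and x: "1 \<le> length x" "set x \<subseteq> A" and y: "length y = length x" "set y \<subseteq> A"
  shows "inv_brel A C (generated_brel C x y)"
  unfolding inv_brel_def preserves_brel_def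
proof (intro conjI ballI allI impI)
  show "generated_brel C x y \<subseteq> A \<times> A"
    using x y clone_closed[OF cl] unfolding generated_brel_def by fastforce
  fix c xs ys assume c: "c \<in> C" and l: "length xs = fst c"
    and col: "list_all2 (\<lambda>u v. (u, v) \<in> generated_brel C x y) xs ys"
  have "\<exists>c'. c' \<in> C \<and> fst c' = length x \<and> xs ! j = snd c' x \<and> ys ! j = snd c' y" if "j < fst c" for j
  proof -
    have "(xs ! j, ys ! j) \<in> generated_brel C x y" using col l that by (simp add: list_all2_conv_all_nth)
    then show ?thesis unfolding generated_brel_def by blast
  qed
  then have "\<forall>j\<in>{..<fst c}. \<exists>c'. c' \<in> C \<and> fst c' = length x \<and> xs ! j = snd c' x \<and> ys ! j = snd c' y"
    by blast
  from bchoice[OF this] obtain cs where cs: "\<forall>j\<in>{..<fst c}.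
      cs j \<in> C \<and> fst (cs j) = length x \<and> xs ! j = snd (cs j) x \<and> ys ! j = snd (cs j) y"
    by blast
  let ?cc = "comp_op A c (length x) cs"
  have "?cc \<in> C" by (rule clone_comp[OF cl c x(1)]) (use cs in auto)
  then have "(snd ?cc x, snd ?cc y) \<in> generated_brel C x y"
    unfolding generated_brel_def by (intro image_eqI[where x = ?cc]) auto
  moreover have "map (\<lambda>i. snd (cs i) x) [0..<fst c] = xs" "map (\<lambda>i. snd (cs i) y) [0..<fst c] = ys"
    using l col cs by (auto simp: list_all2_conv_all_nth intro: nth_equalityI)
  ultimately show "(snd c xs, snd c ys) \<in> generated_brel C x y"
    using x y by (simp add: snd_comp_op)
qed

lemma generated_brel_columns:
  assumes cl: "clone A C" and x: "1 \<le> length x" "set x \<subseteq> A" and y: "length y = length x" "set y \<subseteq> A"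
  shows "list_all2 (\<lambda>u v. (u, v) \<in> generated_brel C x y) x y"
proof (rule list_all2_all_nthI)
  fix j assume j: "j < length x"
  have "proj A (length x) j \<in> C" using clone_proj[OF cl x(1) j] .
  then have "(snd (proj A (length x) j) x, snd (proj A (length x) j) y) \<in> generated_brel C x y"
    unfolding generated_brel_def by (intro image_eqI[where x = "proj A (length x) j"]) auto
  then show "(x ! j, y ! j) \<in> generated_brel C x y" using x y by (simp add: snd_proj)
qed (use y in simp)

lemma mem_clone_if_preserves_inv_brels:
  assumes cl: "clone A C" and fin: "finite A" and maj: "has_majority A C" and g: "g \<in> ops A"
    and pres: "\<And>R. inv_brel A C R \<Longrightarrow> preserves_brel g R"
  shows "g \<in> C"
proof (rule majority_interpolation[OF cl fin maj g])
  fix x y :: "'a list"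
  assume x: "length x = fst g" "set x \<subseteq> A" and y: "length y = fst g" "set y \<subseteq> A"
  have n: "1 \<le> length x" using ops_arity_pos[OF g] x by simp
  have "(snd g x, snd g y) \<in> generated_brel C x y"
    using pres[OF inv_brel_generated_brel[OF cl n x(2) _ y(2)]] generated_brel_columns[OF cl n x(2) _ y(2)] x y
    unfolding preserves_brel_def by simp
  then show "\<exists>c\<in>C. fst c = fst g \<and> snd c x = snd g x \<and> snd c y = snd g y"
    unfolding generated_brel_def using x by auto
qed

section \<open>Minion homomorphisms given by coordinatewise codes\<close>

definition apply_coords :: "nat \<Rightarrow> (nat \<Rightarrow> 'b \<Rightarrow> 'a) \<Rightarrow> 'a operation \<Rightarrow> 'b list \<Rightarrow> 'a list" where
  "apply_coords k h f xs = map (\<lambda>i. snd f (map (h i) xs)) [0..<k]"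

definition encoded_op :: "'b set \<Rightarrow> nat \<Rightarrow> (nat \<Rightarrow> 'b \<Rightarrow> 'a) \<Rightarrow> ('a list \<Rightarrow> 'b) \<Rightarrow> 'a operation \<Rightarrow> 'b operation" where
  "encoded_op B k h e f = (fst f, ext_on B (fst f) (\<lambda>xs. e (apply_coords k h f xs)))"

lemma length_apply_coords [simp]: "length (apply_coords k h f xs) = k"
  by (simp add: apply_coords_def)

lemma nth_apply_coords [simp]: "i < k \<Longrightarrow> apply_coords k h f xs ! i = snd f (map (h i) xs)"
  by (simp add: apply_coords_def)

lemma fst_encoded_op [simp]: "fst (encoded_op B k h e f) = fst f"
  by (simp add: encoded_op_def)

lemma snd_encoded_op:
  "length xs = fst f \<Longrightarrow> set xs \<subseteq> B \<Longrightarrow> snd (encoded_op B k h e f) xs = e (apply_coords k h f xs)"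
  by (simp add: encoded_op_def ext_on_def)

lemma encoded_op_ops:
  assumes f: "f \<in> ops A" and h: "\<And>i v. i < k \<Longrightarrow> v \<in> B \<Longrightarrow> h i v \<in> A"
    and e: "\<And>w. length w = k \<Longrightarrow> set w \<subseteq> A \<Longrightarrow> e w \<in> B"
  shows "encoded_op B k h e f \<in> ops B"
  unfolding ops_def
proof (intro CollectI conjI allI impI)
  show "1 \<le> fst (encoded_op B k h e f)" using ops_arity_pos[OF f] by simp
  fix xs assume xs: "length xs = fst (encoded_op B k h e f) \<and> set xs \<subseteq> B"
  have "set (map (h i) xs) \<subseteq> A" if "i < k" for i using xs h that by auto
  then have "set (apply_coords k h f xs) \<subseteq> A"
    using xs ops_closed[OF f] by (auto simp: apply_coords_def)
  then show "snd (encoded_op B k h e f) xs \<in> B" using xs e by (simp add: snd_encoded_op)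
next
  show "ext_on B (fst (encoded_op B k h e f)) (snd (encoded_op B k h e f)) = snd (encoded_op B k h e f)"
    by (simp add: encoded_op_def ext_on_idem)
qed

lemma encoded_op_minor:
  assumes h: "\<And>i v. i < k \<Longrightarrow> v \<in> B \<Longrightarrow> h i v \<in> A" and \<sigma>: "\<And>i. i < fst f \<Longrightarrow> \<sigma> i < r"
  shows "encoded_op B k h e (minor A f r \<sigma>) = minor B (encoded_op B k h e f) r \<sigma>"
proof -
  have "e (apply_coords k h (minor A f r \<sigma>) xs) = snd (encoded_op B k h e f) (map (\<lambda>i. xs ! \<sigma> i) [0..<fst f])"
    if l: "length xs = r" and s: "set xs \<subseteq> B" for xs
  proof -
    have "set (map (h i) xs) \<subseteq> A" if "i < k" for i using s h that by auto
    then have "apply_coords k h (minor A f r \<sigma>) xs = apply_coords k h f (map (\<lambda>i. xs ! \<sigma> i) [0..<fst f])"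
      unfolding apply_coords_def using l \<sigma> by (auto simp: snd_minor intro!: map_cong arg_cong[where f = "snd f"])
    moreover have "set (map (\<lambda>i. xs ! \<sigma> i) [0..<fst f]) \<subseteq> B" using s l \<sigma> by auto
    ultimately show ?thesis by (simp add: snd_encoded_op)
  qed
  then show ?thesis by (auto simp: encoded_op_def minor_def intro: ext_on_cong)
qed

lemma minion_hom_encoded_op:
  assumes h: "\<And>i v. i < k \<Longrightarrow> v \<in> B \<Longrightarrow> h i v \<in> A" and D: "\<And>f. f \<in> C \<Longrightarrow> encoded_op B k h e f \<in> D"
  shows "minion_hom A B C D (encoded_op B k h e)"
  unfolding minion_hom_def
proof (intro conjI ballI allI impI)
  fix f and r :: nat and \<sigma> :: "nat \<Rightarrow> nat" assume "f \<in> C" "1 \<le> r \<and> (\<forall>i<fst f. \<sigma> i < r)"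
  then show "encoded_op B k h e (minor A f r \<sigma>) = minor B (encoded_op B k h e f) r \<sigma>"
    by (intro encoded_op_minor[OF h]) auto
qed (use D in auto)

section \<open>The Boolean clones I2 and C2\<close>

definition self_dual :: "nat operation \<Rightarrow> bool" where
  "self_dual f \<longleftrightarrow> (\<forall>xs. length xs = fst f \<longrightarrow> set xs \<subseteq> A2 \<longrightarrow> snd f (map (\<lambda>x. 1 - x) xs) = 1 - snd f xs)"

lemma preserves_singleton_iff: "preserves f (1, {[c]}) \<longleftrightarrow> snd f (replicate (fst f) c) = c"
proof -
  have rows: "map (\<lambda>j. cols j ! 0) [0..<fst f] = replicate (fst f) c" if "\<forall>j<fst f. cols j \<in> {[c]}" for cols
    using that by (intro nth_equalityI) auto
  have "preserves f (1, {[c]}) \<longleftrightarrow>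
      (\<forall>cols. (\<forall>j<fst f. cols j \<in> {[c]}) \<longrightarrow> snd f (map (\<lambda>j. cols j ! 0) [0..<fst f]) = c)"
    by (simp add: preserves_def)
  also have "\<dots> \<longleftrightarrow> snd f (replicate (fst f) c) = c"
  proof
    assume p: "\<forall>cols. (\<forall>j<fst f. cols j \<in> {[c]}) \<longrightarrow> snd f (map (\<lambda>j. cols j ! 0) [0..<fst f]) = c"
    then show "snd f (replicate (fst f) c) = c" using p[rule_format, of "\<lambda>_. [c]"] rows[of "\<lambda>_. [c]"] by simp
  qed (simp add: rows)
  finally show ?thesis .
qed

lemma preserves_brel_neq_iff:
  assumes f: "f \<in> ops A2"
  shows "preserves_brel f {(0, 1), (1, 0)} \<longleftrightarrow> self_dual f"
proof -
  have neq: "list_all2 (\<lambda>x y. (x, y) \<in> {(0, 1), (1, 0)}) xs ys \<longleftrightarrow> set xs \<subseteq> A2 \<and> ys = map (\<lambda>x. 1 - x) xs"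
    for xs ys :: "nat list"
    by (induction xs arbitrary: ys) (auto simp: A2_iff list_all2_Cons1)
  show ?thesis
  proof
    assume "preserves_brel f {(0, 1), (1, 0)}"
    then show "self_dual f"
      unfolding preserves_brel_def self_dual_def neq using ops_closed[OF f] by (fastforce simp: A2_iff)
  next
    assume "self_dual f"
    then show "preserves_brel f {(0, 1), (1, 0)}"
      unfolding preserves_brel_def self_dual_def neq using ops_closed[OF f] by (fastforce simp: A2_iff)
  qed
qed

lemma mem_I2_iff:
  "f \<in> I2 \<longleftrightarrow> f \<in> ops A2 \<and> snd f (replicate (fst f) 0) = 0 \<and> snd f (replicate (fst f) 1) = 1"
proof -
  have "f \<in> I2 \<longleftrightarrow> f \<in> ops A2 \<and> preserves f (1, {[0]}) \<and> preserves f (1, {[1]})"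
    unfolding I2_def Pol_def by blast
  then show ?thesis by (simp only: preserves_singleton_iff)
qed

lemma mem_C2_iff: "f \<in> C2 \<longleftrightarrow> f \<in> I2 \<and> self_dual f"
proof -
  have "{[0::nat, 1], [1, 0]} = {[x, y] | x y. (x, y) \<in> {(0, 1), (1, 0)}}" by auto
  then have "f \<in> C2 \<longleftrightarrow> f \<in> I2 \<and> preserves_brel f {(0, 1), (1, 0)}"
    unfolding C2_def I2_def Pol_def preserves_pair_rel_iff[symmetric] by auto
  then show ?thesis unfolding mem_I2_iff using preserves_brel_neq_iff by blast
qed

lemma self_dualD:
  "self_dual f \<Longrightarrow> length xs = fst f \<Longrightarrow> set xs \<subseteq> A2 \<Longrightarrow> snd f (map (\<lambda>x. 1 - x) xs) = 1 - snd f xs"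
  by (simp add: self_dual_def)

text \<open>By idempotence, an operation of I2 applied to a pattern that is \<open>u\<close> at the positions of \<open>p\<close> and
  \<open>w\<close> elsewhere takes the value \<open>pick u w \<alpha> \<beta>\<close>, where \<open>\<alpha>\<close> and \<open>\<beta>\<close> are its values on the
  patterns 0/1 and 1/0.\<close>

definition pick :: "nat \<Rightarrow> nat \<Rightarrow> nat \<Rightarrow> nat \<Rightarrow> nat" where
  "pick u w \<alpha> \<beta> = (if u = w then u else if u = 0 then \<alpha> else \<beta>)"

lemma map_pick:
  assumes "\<And>i v. i < k \<Longrightarrow> h i v \<in> A2"
  shows map_pick_0_1: "map (\<lambda>i. pick (h i u) (h i w) 0 1) [0..<k] = map (\<lambda>i. h i u) [0..<k]"
    and map_pick_1_0: "map (\<lambda>i. pick (h i u) (h i w) 1 0) [0..<k] = map (\<lambda>i. h i w) [0..<k]"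
proof -
  have "pick (h i u) (h i w) 0 1 = h i u \<and> pick (h i u) (h i w) 1 0 = h i w" if "i < k" for i
  proof -
    have "h i u \<in> A2" "h i w \<in> A2" using assms that by auto
    then show ?thesis unfolding A2_iff pick_def by auto
  qed
  then show "map (\<lambda>i. pick (h i u) (h i w) 0 1) [0..<k] = map (\<lambda>i. h i u) [0..<k]"
    "map (\<lambda>i. pick (h i u) (h i w) 1 0) [0..<k] = map (\<lambda>i. h i w) [0..<k]"
    by (auto intro!: map_cong)
qed

lemma snd_two_valued_pattern:
  assumes f: "f \<in> I2" and l: "length xs = fst f" and uw: "u \<in> A2" "w \<in> A2"
  shows "snd f (map (\<lambda>v. if v = p then u else w) xs)
    = pick u w (snd f (map (\<lambda>v. if v = p then 0 else 1) xs)) (snd f (map (\<lambda>v. if v = p then 1 else 0) xs))"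
  using uw f l unfolding A2_iff mem_I2_iff
  by (elim disjE; hypsubst; simp add: pick_def map_replicate_const)

lemma apply_coords_two_valued:
  assumes f: "f \<in> I2" and h: "\<And>i v. i < k \<Longrightarrow> h i v \<in> A2" and l: "length xs = fst f" and s: "set xs \<subseteq> {p, q}"
  shows "apply_coords k h f (map g xs) = map (\<lambda>i. pick (h i (g p)) (h i (g q))
    (snd f (map (\<lambda>v. if v = p then 0 else 1) xs)) (snd f (map (\<lambda>v. if v = p then 1 else 0) xs))) [0..<k]"
proof (rule nth_equalityI)
  fix i assume "i < length (apply_coords k h f (map g xs))"
  then have i: "i < k" by simp
  have "apply_coords k h f (map g xs) ! i = snd f (map (h i) (map g xs))" using i by simp
  also have "map (h i) (map g xs) = map (\<lambda>v. if v = p then h i (g p) else h i (g q)) xs"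
    using s by (auto intro: map_cong)
  also have "snd f \<dots> = pick (h i (g p)) (h i (g q))
    (snd f (map (\<lambda>v. if v = p then 0 else 1) xs)) (snd f (map (\<lambda>v. if v = p then 1 else 0) xs))"
    using snd_two_valued_pattern[OF f l h h] i by blast
  finally show "apply_coords k h f (map g xs) ! i = map (\<lambda>i. pick (h i (g p)) (h i (g q))
    (snd f (map (\<lambda>v. if v = p then 0 else 1) xs)) (snd f (map (\<lambda>v. if v = p then 1 else 0) xs))) [0..<k] ! i"
    using i by simp
qed simp

definition bool_restriction :: "'a \<Rightarrow> 'a \<Rightarrow> 'a operation \<Rightarrow> nat operation" where
  "bool_restriction p q = encoded_op A2 1 (\<lambda>_ b. if b = 0 then p else q) (\<lambda>w. if hd w = p then 0 else 1)"

lemma fst_bool_restriction [simp]: "fst (bool_restriction p q f) = fst f"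
  by (simp add: bool_restriction_def)

lemma snd_bool_restriction:
  "length xs = fst f \<Longrightarrow> set xs \<subseteq> A2 \<Longrightarrow>
   snd (bool_restriction p q f) xs = (if snd f (map (\<lambda>b. if b = 0 then p else q) xs) = p then 0 else 1)"
  by (simp add: bool_restriction_def snd_encoded_op apply_coords_def)

lemma bool_restriction_I2:
  assumes cl: "clone A C" and idem: "idempotent_clone A C" and pq: "p \<in> A" "q \<in> A" "p \<noteq> q"
    and f: "f \<in> C"
  shows "bool_restriction p q f \<in> I2"
proof -
  have "bool_restriction p q f \<in> ops A2"
    unfolding bool_restriction_def
    by (rule encoded_op_ops[OF clone_ops[OF cl f]]) (use pq in \<open>auto simp: A2_def\<close>)
  moreover have "snd (bool_restriction p q f) (replicate (fst f) b) = b" if "b \<in> A2" for b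
  proof -
    have "snd f (replicate (fst f) (if b = 0 then p else q)) = (if b = 0 then p else q)"
      using idem f pq by (simp add: idempotent_clone_def)
    moreover have "set (replicate (fst f) b) \<subseteq> A2" using that by auto
    ultimately show ?thesis using that pq(3) by (auto simp: snd_bool_restriction A2_iff)
  qed
  ultimately show ?thesis by (simp add: mem_I2_iff A2_def)
qed

lemma minion_hom_bool_restriction_I2:
  assumes "clone A C" "idempotent_clone A C" "p \<in> A" "q \<in> A" "p \<noteq> q"
  shows "minion_hom A A2 C I2 (bool_restriction p q)"
  unfolding bool_restriction_def
  by (rule minion_hom_encoded_op)
    (use assms bool_restriction_I2[OF assms] in \<open>simp_all add: bool_restriction_def\<close>)

lemma minion_hom_bool_restriction_C2:
  assumes cl: "clone A C" and idem: "idempotent_clone A C" and pq: "p \<in> A" "q \<in> A" "p \<noteq> q"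
    and swap: "inv_brel A C {(p, q), (q, p)}"
  shows "minion_hom A A2 C C2 (bool_restriction p q)"
proof -
  have "self_dual (bool_restriction p q f)" if f: "f \<in> C" for f
    unfolding self_dual_def
  proof (intro allI impI)
    fix xs :: "nat list" assume l: "length xs = fst (bool_restriction p q f)" and s: "set xs \<subseteq> A2"
    let ?emb = "\<lambda>b::nat. if b = 0 then p else q"
    have "list_all2 (\<lambda>x y. (x, y) \<in> {(p, q), (q, p)}) (map ?emb xs) (map ?emb (map (\<lambda>x. 1 - x) xs))"
      using s by (induction xs) (auto simp: A2_iff)
    then have "(snd f (map ?emb xs), snd f (map ?emb (map (\<lambda>x. 1 - x) xs))) \<in> {(p, q), (q, p)}"
      using inv_brelD[OF swap f] l by simp
    moreover have "set (map (\<lambda>x. 1 - x) xs) \<subseteq> A2" using s by (auto simp: A2_def)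
    ultimately show "snd (bool_restriction p q f) (map (\<lambda>x. 1 - x) xs) = 1 - snd (bool_restriction p q f) xs"
      using l s pq(3) by (auto simp: snd_bool_restriction)
  qed
  then show ?thesis
    unfolding bool_restriction_def
    by (intro minion_hom_encoded_op)
      (use pq bool_restriction_I2[OF cl idem pq] in \<open>auto simp: mem_C2_iff bool_restriction_def\<close>)
qed

text \<open>For \<open>a, x \<in> {0,1,2}\<close>, \<open>swap3 a\<close> exchanges the two elements other than \<open>a\<close>, whose sum is \<open>3 - a\<close>.\<close>

definition swap3 :: "nat \<Rightarrow> nat \<Rightarrow> nat" where
  "swap3 a x = (if x = a then a else 3 - a - x)"

definition swap3_rel :: "nat \<Rightarrow> (nat \<times> nat) set" where
  "swap3_rel a = (\<lambda>x. (x, swap3 a x)) ` A3"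

definition cycle_rel :: "(nat \<times> nat) set" where
  "cycle_rel = {(0, 1), (1, 2), (2, 0)}"

definition mu_rel :: "nat \<Rightarrow> (nat \<times> nat) set" where
  "mu_rel i = {(x, y). x \<in> A3 \<and> y \<in> A3 \<and> (x = i \<longleftrightarrow> y = i)}"

lemma mem_swap3_rel: "(x, y) \<in> swap3_rel a \<longleftrightarrow> x \<in> A3 \<and> y = swap3 a x"
  by (auto simp: swap3_rel_def)

lemma swap3_A3: "a \<in> A3 \<Longrightarrow> x \<in> A3 \<Longrightarrow> swap3 a x \<in> A3"
  unfolding A3_iff swap3_def by auto

lemma swap3_rel_eq: "swap3_rel a = {(0, swap3 a 0), (1, swap3 a 1), (2, swap3 a 2)}"
  by (simp add: swap3_rel_def A3_def)

lemma swap3_rel_relcomp: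
  assumes "a \<in> A3" "b \<in> A3" "a \<noteq> b"
  shows "swap3_rel a O swap3_rel b = (if b = (a + 1) mod 3 then cycle_rel\<inverse> else cycle_rel)"
  using assms unfolding A3_iff
  by (elim disjE) (simp_all add: cycle_rel_def swap3_rel_eq swap3_def, auto)

lemma Id_on_A3: "Id_on A3 = {(0, 0), (1, 1), (2, 2)}"
  by (auto simp: A3_def)

lemma subset_A3_eq_if_distinct:
  assumes "U \<subseteq> A3" "x \<in> U" "y \<in> U" "z \<in> U" "x \<noteq> y" "x \<noteq> z" "y \<noteq> z"
  shows "U = A3"
proof -
  have "x \<in> A3" "y \<in> A3" "z \<in> A3" using assms(1-4) by auto
  then have "A3 \<subseteq> {x, y, z}" using assms(5-7) unfolding A3_def by auto
  then show ?thesis using assms(1-4) by auto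
qed

lemma subset_A3_eq_pair:
  assumes "U \<subseteq> A3" "U \<noteq> A3" "x \<in> U" "y \<in> U" "x \<noteq> y"
  shows "U = {x, y}"
  using assms subset_A3_eq_if_distinct[OF assms(1,3,4)] by blast

lemma graph_on_A3:
  assumes R: "R \<subseteq> A3 \<times> A3" "Domain R = A3" "single_valued R"
  obtains a0 a1 a2 where "R = {(0, a0), (1, a1), (2, a2)}"
proof -
  have "\<exists>y. (x, y) \<in> R" if "x \<in> A3" for x using R(2) that by blast
  then obtain a0 a1 a2 where a: "(0, a0) \<in> R" "(1, a1) \<in> R" "(2, a2) \<in> R"
    by (metis A3_iff)
  have "R \<subseteq> {(0, a0), (1, a1), (2, a2)}"
  proof
    fix uv assume uv: "uv \<in> R"
    then obtain u v where "uv = (u, v)" "u = 0 \<or> u = 1 \<or> u = 2" using R(1) by (auto simp: A3_iff)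
    then show "uv \<in> {(0, a0), (1, a1), (2, a2)}"
      using uv a single_valuedD[OF R(3)] by auto
  qed
  then show ?thesis using a that by blast
qed

lemma permutation_graph_cases:
  assumes R: "R \<subseteq> A3 \<times> A3" "Domain R = A3" "single_valued R" "single_valued (R\<inverse>)"
  shows "R = Id_on A3 \<or> (\<exists>a\<in>A3. R = swap3_rel a) \<or> R = cycle_rel \<or> R\<inverse> = cycle_rel"
proof -
  obtain a0 a1 a2 where Req: "R = {(0, a0), (1, a1), (2, a2)}" using graph_on_A3[OF R(1-3)] .
  have inj: "x = y" if "(x, b) \<in> R" "(y, b) \<in> R" for x y b
    using R(4) that by (auto simp: single_valued_def)
  have "a0 \<noteq> a1" "a0 \<noteq> a2" "a1 \<noteq> a2"
    using inj[of 0 a0 1] inj[of 0 a0 2] inj[of 1 a1 2] Req by auto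
  moreover have "a0 \<in> A3" "a1 \<in> A3" "a2 \<in> A3" using Req R(1) by auto
  ultimately consider "a0 = 0" "a1 = 1" "a2 = 2" | "a0 = 0" "a1 = 2" "a2 = 1" | "a0 = 2" "a1 = 1" "a2 = 0"
    | "a0 = 1" "a1 = 0" "a2 = 2" | "a0 = 1" "a1 = 2" "a2 = 0" | "a0 = 2" "a1 = 0" "a2 = 1"
    unfolding A3_iff by fastforce
  then show ?thesis
  proof cases
    case 1 then show ?thesis using Req by (simp add: Id_on_A3)
  next
    case 2
    then have "R = swap3_rel 0" using Req by (simp add: swap3_rel_eq swap3_def)
    then show ?thesis by (auto simp: A3_def)
  next
    case 3
    then have "R = swap3_rel 1" using Req by (simp add: swap3_rel_eq swap3_def)
    then show ?thesis by (auto simp: A3_def)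
  next
    case 4
    then have "R = swap3_rel 2" using Req by (simp add: swap3_rel_eq swap3_def)
    then show ?thesis by (auto simp: A3_def)
  next
    case 5 then show ?thesis using Req by (simp add: cycle_rel_def)
  next
    case 6
    then have "R\<inverse> = cycle_rel" using Req by (auto simp: cycle_rel_def)
    then show ?thesis by blast
  qed
qed

lemma partial_bijection_cases:
  assumes R: "R \<subseteq> A3 \<times> A3" "Domain R \<noteq> A3" "single_valued R" "single_valued (R\<inverse>)"
  shows "R = Domain R \<times> Range R \<or> (\<exists>p q p' q'. p \<noteq> q \<and> p' \<noteq> q' \<and> R = {(p, p'), (q, q')})"
proof (cases "\<exists>p p' q q'. (p, p') \<in> R \<and> (q, q') \<in> R \<and> (p, p') \<noteq> (q, q')")
  case True
  then obtain p p' q q' where pq: "(p, p') \<in> R" "(q, q') \<in> R" "(p, p') \<noteq> (q, q')" by blast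
  then have neq: "p \<noteq> q" "p' \<noteq> q'" using R(3,4) by (auto dest: single_valuedD)
  have "Domain R \<subseteq> A3" "p \<in> Domain R" "q \<in> Domain R" using R(1) pq by auto
  then have dom: "Domain R = {p, q}" using subset_A3_eq_pair R(2) neq(1) by blast
  have "(r, r') \<in> {(p, p'), (q, q')}" if "(r, r') \<in> R" for r r'
  proof -
    have "r = p \<or> r = q" using that dom by blast
    then show ?thesis using that pq single_valuedD[OF R(3)] by blast
  qed
  then have "R = {(p, p'), (q, q')}" using pq by auto
  then show ?thesis using neq by blast
next
  case False
  then have "R = Domain R \<times> Range R" by auto
  then show ?thesis ..
qed

lemma two_valued_or_onto_A3:
  assumes "set xs \<subseteq> A3" "xs \<noteq> []"
  obtains "set xs = A3" | p q where "p \<in> set xs" "q \<in> set xs" "set xs \<subseteq> {p, q}"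
proof -
  obtain p where p: "p \<in> set xs" using assms(2) by (cases xs) auto
  show ?thesis
  proof (cases "set xs \<subseteq> {p}")
    case True then show ?thesis using that(2) p by blast
  next
    case False
    then obtain q where q: "q \<in> set xs" "q \<noteq> p" by blast
    show ?thesis
    proof (cases "set xs \<subseteq> {p, q}")
      case True then show ?thesis using that(2) p q by blast
    next
      case False
      then obtain r where "r \<in> set xs" "r \<noteq> p" "r \<noteq> q" by blast
      then have "set xs = A3" using subset_A3_eq_if_distinct[OF assms(1) p q(1)] q(2) by blast
      then show ?thesis by (rule that(1))
    qed
  qed
qed

section \<open>Binary invariant relations of the clone\<close>

locale malcev_majority_clone3 =
  fixes C :: "nat operation set"
  assumes clone: "clone A3 C"
    and idempotent: "idempotent_clone A3 C"
    and malcev: "malcev_clone A3 C"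
    and majority: "has_majority A3 C"
    and not_preserves_mu: "\<And>i. i \<in> A3 \<Longrightarrow> \<not> clone_preserves C (mu i)"
    and not_preserves_phi: "\<not> clone_preserves C phi"
begin

lemma mem_C_if_preserves_inv_brels:
  "g \<in> ops A3 \<Longrightarrow> (\<And>R. inv_brel A3 C R \<Longrightarrow> preserves_brel g R) \<Longrightarrow> g \<in> C"
  using mem_clone_if_preserves_inv_brels[OF clone _ majority] by (simp add: A3_def)

lemma not_inv_mu_rel: "i \<in> A3 \<Longrightarrow> \<not> inv_brel A3 C (mu_rel i)"
proof
  assume i: "i \<in> A3" and inv: "inv_brel A3 C (mu_rel i)"
  have "mu i = (2, {[x, y] | x y. (x, y) \<in> mu_rel i})" by (simp add: mu_def mu_rel_def)
  then show False using clone_preserves_pair_rel[OF inv] not_preserves_mu[OF i] by simp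
qed

lemma not_inv_cycle_rel: "\<not> inv_brel A3 C cycle_rel" "\<not> inv_brel A3 C (cycle_rel\<inverse>)"
proof -
  have phi: "phi = (2, {[x, y] | x y. (x, y) \<in> cycle_rel})" by (auto simp: phi_def cycle_rel_def)
  show not_cycle: "\<not> inv_brel A3 C cycle_rel"
  proof
    assume "inv_brel A3 C cycle_rel"
    then show False using clone_preserves_pair_rel not_preserves_phi unfolding phi by blast
  qed
  show "\<not> inv_brel A3 C (cycle_rel\<inverse>)" using not_cycle inv_brel_converse by fastforce
qed

lemma inv_equiv_cases:
  assumes E: "inv_brel A3 C E" "equiv A3 E"
  shows "E = Id_on A3 \<or> E = A3 \<times> A3"
proof (rule ccontr)
  assume nontrivial: "\<not> (E = Id_on A3 \<or> E = A3 \<times> A3)"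
  have refl: "(u, u) \<in> E" if "u \<in> A3" for u using E(2) that by (meson equiv_def refl_onD)
  have sym: "(v, u) \<in> E" if "(u, v) \<in> E" for u v using E(2) that by (auto simp: equiv_def dest: symD)
  have trans: "(u, w) \<in> E" if "(u, v) \<in> E" "(v, w) \<in> E" for u v w
    using E(2) that by (auto simp: equiv_def dest: transD)
  have sub: "E \<subseteq> A3 \<times> A3" using inv_brel_subset[OF E(1)] .
  obtain x y where xy: "(x, y) \<in> E" "x \<noteq> y" using nontrivial sub refl by auto
  have "x \<in> A3" "y \<in> A3" using xy sub by auto
  define z where "z = 3 - x - y" \<comment> \<open>the third element\<close>
  have z: "z \<in> A3" "z \<noteq> x" "z \<noteq> y"
    using \<open>x \<in> A3\<close> \<open>y \<in> A3\<close> xy(2) unfolding z_def A3_iff by auto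
  have A3_xyz: "A3 = {x, y, z}"
    using subset_A3_eq_if_distinct[of "{x, y, z}" x y z] \<open>x \<in> A3\<close> \<open>y \<in> A3\<close> z xy(2) by auto
  have xz: "(x, z) \<notin> E"
  proof
    assume "(x, z) \<in> E"
    then have xu: "(x, u) \<in> E" if "u \<in> A3" for u
      using that xy(1) refl[OF \<open>x \<in> A3\<close>] unfolding A3_xyz by blast
    have "(u, v) \<in> E" if "u \<in> A3" "v \<in> A3" for u v
      using trans[OF sym[OF xu[OF that(1)]] xu[OF that(2)]] .
    then have "E = A3 \<times> A3" using sub by auto
    then show False using nontrivial by blast
  qed
  have yz: "(y, z) \<notin> E" using xz trans[OF xy(1)] by blast
  have "(z, x) \<notin> E" "(z, y) \<notin> E" using xz yz sym by blast+
  moreover have "(x, x) \<in> E" "(y, y) \<in> E" "(z, z) \<in> E" using refl unfolding A3_xyz by auto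
  ultimately have "(u, v) \<in> E \<longleftrightarrow> (u = z \<longleftrightarrow> v = z)" if "u \<in> A3" "v \<in> A3" for u v
    using that xy sym[OF xy(1)] xz yz z(2,3) unfolding A3_xyz by auto
  then have "E = mu_rel z" using sub unfolding mu_rel_def by auto
  then show False using not_inv_mu_rel[OF z(1)] E(1) by simp
qed

lemma Range_square_subset_converse_relcomp:
  assumes R: "inv_brel A3 C R" and xy: "(x, y) \<in> R" "(x, y') \<in> R" "y \<noteq> y'"
  shows "Range R \<times> Range R \<subseteq> R\<inverse> O R"
proof (cases "Range R = A3")
  case True
  have L: "inv_brel A3 C (R\<inverse> O R)" by (intro inv_brel_relcomp inv_brel_converse R)
  have "equiv A3 (R\<inverse> O R)"
  proof (rule equivI)
    show "R\<inverse> O R \<subseteq> A3 \<times> A3" using inv_brel_subset[OF L] .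
    show "refl_on A3 (R\<inverse> O R)" unfolding refl_on_def using True by blast
    show "sym (R\<inverse> O R)" unfolding sym_def by blast
    show "trans (R\<inverse> O R)"
      unfolding trans_def using inv_brel_rectangular[OF malcev R] by (meson converse_iff relcomp.simps)
  qed
  moreover have "(y, y') \<in> R\<inverse> O R" using xy by blast
  ultimately have "R\<inverse> O R = A3 \<times> A3" using inv_equiv_cases[OF L] xy(3) by auto
  then show ?thesis using True by simp
next
  case False
  have "Range R \<subseteq> A3" "y \<in> Range R" "y' \<in> Range R" using inv_brel_subset[OF R] xy by auto
  then have "Range R = {y, y'}" by (rule subset_A3_eq_pair[OF _ False _ _ xy(3)])
  then show ?thesis using xy by auto
qed

lemma inv_brel_Times_if_not_single_valued:
  assumes R: "inv_brel A3 C R" and "\<not> single_valued R"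
  shows "R = Domain R \<times> Range R"
proof
  obtain x y y' where xy: "(x, y) \<in> R" "(x, y') \<in> R" "y \<noteq> y'"
    using assms(2) by (auto simp: single_valued_def)
  show "Domain R \<times> Range R \<subseteq> R"
  proof clarify
    fix a b a' b' assume ab: "(a, b') \<in> R" "(a', b) \<in> R"
    then have "(b', b) \<in> R\<inverse> O R" using Range_square_subset_converse_relcomp[OF R xy] by blast
    then obtain z where "(z, b') \<in> R" "(z, b) \<in> R" by blast
    then show "(a, b) \<in> R" using inv_brel_rectangular[OF malcev R ab(1)] by blast
  qed
qed auto

lemma inv_brel_cases:
  assumes R: "inv_brel A3 C R"
  obtains (product) "R = Domain R \<times> Range R"
    | (matching) p q p' q' where "p \<noteq> q" "p' \<noteq> q'" "R = {(p, p'), (q, q')}"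
    | (identity) "R = Id_on A3"
    | (swap) a where "a \<in> A3" "R = swap3_rel a"
proof (cases "single_valued R \<and> single_valued (R\<inverse>)")
  case False
  have "R = Domain R \<times> Range R"
  proof (cases "single_valued R")
    case True
    then have "R\<inverse> = Domain (R\<inverse>) \<times> Range (R\<inverse>)"
      using False by (intro inv_brel_Times_if_not_single_valued inv_brel_converse R) blast
    then show ?thesis by auto
  qed (rule inv_brel_Times_if_not_single_valued[OF R])
  then show ?thesis by (rule product)
next
  case True
  have sub: "R \<subseteq> A3 \<times> A3" using inv_brel_subset[OF R] .
  show ?thesis
  proof (cases "Domain R = A3")
    case dom: True
    consider "R = Id_on A3" | a where "a \<in> A3" "R = swap3_rel a" | "R = cycle_rel" | "R\<inverse> = cycle_rel"
      using permutation_graph_cases[OF sub dom] True by blast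
    then show ?thesis
    proof cases
      case 3 then show ?thesis using R not_inv_cycle_rel(1) by simp
    next
      case 4 then show ?thesis using inv_brel_converse[OF R] not_inv_cycle_rel(1) by simp
    qed (fact identity swap)+
  next
    case False
    show ?thesis using partial_bijection_cases[OF sub False] True product matching by blast
  qed
qed

lemma inv_swap3_rel_unique:
  assumes "a \<in> A3" "b \<in> A3" "inv_brel A3 C (swap3_rel a)" "inv_brel A3 C (swap3_rel b)"
  shows "a = b"
proof (rule ccontr)
  assume "a \<noteq> b"
  moreover have "inv_brel A3 C (swap3_rel a O swap3_rel b)"
    using assms(3,4) by (rule inv_brel_relcomp)
  ultimately show False
    using swap3_rel_relcomp[OF assms(1,2)] not_inv_cycle_rel by (auto split: if_splits)
qed

text \<open>The fixed point of the invariant transposition of {0,1,2} if there is one (it is unique), an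
  arbitrary point otherwise.\<close>

definition swap_center :: nat where
  "swap_center = (SOME a. a \<in> A3 \<and> (\<forall>b\<in>A3. inv_brel A3 C (swap3_rel b) \<longrightarrow> b = a))"

lemma swap_center: "swap_center \<in> A3" "b \<in> A3 \<Longrightarrow> inv_brel A3 C (swap3_rel b) \<Longrightarrow> b = swap_center"
proof -
  have "\<exists>a. a \<in> A3 \<and> (\<forall>b\<in>A3. inv_brel A3 C (swap3_rel b) \<longrightarrow> b = a)"
  proof (cases "\<exists>b\<in>A3. inv_brel A3 C (swap3_rel b)")
    case True
    then show ?thesis using inv_swap3_rel_unique by blast
  next
    case False
    then show ?thesis by (auto simp: A3_def)
  qed
  then have "swap_center \<in> A3 \<and> (\<forall>b\<in>A3. inv_brel A3 C (swap3_rel b) \<longrightarrow> b = swap_center)"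
    unfolding swap_center_def by (rule someI_ex)
  then show "swap_center \<in> A3" "b \<in> A3 \<Longrightarrow> inv_brel A3 C (swap3_rel b) \<Longrightarrow> b = swap_center"
    by blast+
qed

lemma mem_C_by_inv_brel_cases:
  assumes g: "g \<in> ops A3"
    and subuniverses: "\<And>U xs. subuniverse A3 C U \<Longrightarrow> length xs = fst g \<Longrightarrow> set xs \<subseteq> U \<Longrightarrow> snd g xs \<in> U"
    and matchings: "\<And>p q p' q' xs. p \<noteq> q \<Longrightarrow> p' \<noteq> q' \<Longrightarrow> inv_brel A3 C {(p, p'), (q, q')} \<Longrightarrow>
      length xs = fst g \<Longrightarrow> set xs \<subseteq> {p, q} \<Longrightarrow>
      (snd g xs, snd g (map (\<lambda>v. if v = p then p' else q') xs)) \<in> {(p, p'), (q, q')}"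
    and swaps: "\<And>a xs. a \<in> A3 \<Longrightarrow> inv_brel A3 C (swap3_rel a) \<Longrightarrow> length xs = fst g \<Longrightarrow> set xs \<subseteq> A3 \<Longrightarrow>
      snd g (map (swap3 a) xs) = swap3 a (snd g xs)"
  shows "g \<in> C"
proof (rule mem_C_if_preserves_inv_brels[OF g])
  fix R assume R: "inv_brel A3 C R"
  show "preserves_brel g R"
    unfolding preserves_brel_def
  proof (intro allI impI)
    fix xs ys assume l: "length xs = fst g" and col: "list_all2 (\<lambda>x y. (x, y) \<in> R) xs ys"
    have xs: "set xs \<subseteq> Domain R" and ys: "set ys \<subseteq> Range R" and "length ys = fst g"
      using list_all2_set_Domain_Range[OF col] list_all2_lengthD[OF col] l by auto
    from R show "(snd g xs, snd g ys) \<in> R"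
    proof (cases rule: inv_brel_cases)
      case product
      then show ?thesis
        using subuniverses[OF subuniverse_Domain[OF R] l xs] subuniverses[OF subuniverse_Range[OF R] \<open>length ys = fst g\<close> ys]
        by blast
    next
      case (matching p q p' q')
      have "ys = map (\<lambda>v. if v = p then p' else q') xs"
        by (rule list_all2_graph[OF col]) (use matching in auto)
      moreover have "set xs \<subseteq> {p, q}" using xs matching(3) by auto
      ultimately show ?thesis
        using matchings[OF matching(1,2) _ l] R unfolding matching(3) by blast
    next
      case identity
      then have "ys = xs" "set xs \<subseteq> A3" using col xs by (auto intro: list_all2_graph[where h = id, simplified])
      then show ?thesis using identity ops_closed[OF g l] by auto
    next
      case (swap a)
      have "ys = map (swap3 a) xs" by (rule list_all2_graph[OF col]) (use swap in \<open>auto simp: mem_swap3_rel\<close>)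
      moreover have "set xs \<subseteq> A3" using xs swap by (auto simp: mem_swap3_rel)
      ultimately show ?thesis
        using swap R ops_closed[OF g l] \<open>set xs \<subseteq> A3\<close> l by (simp add: mem_swap3_rel swaps)
    qed
  qed
qed

end

section \<open>A minion homomorphism from C2\<close>

definition lower :: "nat \<Rightarrow> nat" where
  "lower a = (if a = 0 then 1 else 0)"

definition upper :: "nat \<Rightarrow> nat" where
  "upper a = (if a = 2 then 1 else 2)"

text \<open>The code of \<open>a\<close> is [0, 1], that of \<open>lower a\<close> is [0, 0] and that of \<open>upper a\<close> is [1, 1]; so
  \<open>swap3 a\<close> acts on codes as \<open>[u, v] \<mapsto> [1 - v, 1 - u]\<close>, which self-dual operations respect.\<close>

definition bin_code :: "nat \<Rightarrow> nat \<Rightarrow> nat \<Rightarrow> nat" where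
  "bin_code a i v = (if v = a then i else if v = lower a then 0 else 1)"

definition bin_decode :: "nat \<Rightarrow> nat list \<Rightarrow> nat" where
  "bin_decode a w = (if w = [0, 0] then lower a else if w = [1, 1] then upper a else a)"

lemma bin_code_A2: "i < 2 \<Longrightarrow> bin_code a i v \<in> A2"
  by (auto simp: bin_code_def A2_def)

lemma bin_decode_A3: "a \<in> A3 \<Longrightarrow> bin_decode a w \<in> A3"
  by (auto simp: bin_decode_def lower_def upper_def A3_def)

lemma bin_decode_code: "a \<in> A3 \<Longrightarrow> v \<in> A3 \<Longrightarrow> bin_decode a (map (\<lambda>i. bin_code a i v) [0..<2]) = v"
  unfolding A3_iff by (elim disjE) (simp_all add: bin_decode_def bin_code_def lower_def upper_def upt_rec)

lemma bin_code_swap3: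
  "a \<in> A3 \<Longrightarrow> v \<in> A3 \<Longrightarrow> i < 2 \<Longrightarrow> bin_code a i (swap3 a v) = 1 - bin_code a (1 - i) v"
  unfolding A3_iff by (auto simp: bin_code_def lower_def swap3_def less_Suc_eq numeral_2_eq_2)

lemma bin_decode_swap3:
  "a \<in> A3 \<Longrightarrow> t0 \<in> A2 \<Longrightarrow> t1 \<in> A2 \<Longrightarrow> bin_decode a [1 - t1, 1 - t0] = swap3 a (bin_decode a [t0, t1])"
  unfolding A3_iff A2_iff by (elim disjE) (simp_all add: bin_decode_def lower_def upper_def swap3_def)

definition c2_embedding :: "nat \<Rightarrow> nat operation \<Rightarrow> nat operation" where
  "c2_embedding a = encoded_op A3 2 (bin_code a) (bin_decode a)"

lemma fst_c2_embedding [simp]: "fst (c2_embedding a f) = fst f"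
  by (simp add: c2_embedding_def)

lemma snd_c2_embedding:
  "length xs = fst f \<Longrightarrow> set xs \<subseteq> A3 \<Longrightarrow> snd (c2_embedding a f) xs = bin_decode a (apply_coords 2 (bin_code a) f xs)"
  by (simp add: c2_embedding_def snd_encoded_op)

lemma c2_embedding_ops: "f \<in> C2 \<Longrightarrow> a \<in> A3 \<Longrightarrow> c2_embedding a f \<in> ops A3"
  unfolding c2_embedding_def
  by (rule encoded_op_ops) (use bin_code_A2 bin_decode_A3 in \<open>auto simp: mem_C2_iff mem_I2_iff A2_def\<close>)

lemma c2_embedding_two_valued:
  assumes f: "f \<in> C2" and a: "a \<in> A3" and l: "length xs = fst f" and s: "set xs \<subseteq> {p, q}"
    and A: "p \<in> A3" "q \<in> A3" "g p \<in> A3" "g q \<in> A3"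
  shows "(snd (c2_embedding a f) xs, snd (c2_embedding a f) (map g xs)) \<in> {(p, g p), (q, g q)}"
proof -
  have f2: "f \<in> I2" and sd: "self_dual f" using f by (simp_all add: mem_C2_iff)
  define X where "X = map (\<lambda>v. if v = p then 0 else 1 :: nat) xs"
  define \<alpha> where "\<alpha> = snd f X"
  have X: "length X = fst f" "set X \<subseteq> A2" using l by (auto simp: X_def A2_def)
  have \<alpha>: "\<alpha> \<in> A2" unfolding \<alpha>_def by (rule ops_closed[OF _ X]) (use f2 in \<open>simp add: mem_I2_iff\<close>)
  have "map (\<lambda>v. if v = p then 1 else 0) xs = map (\<lambda>x. 1 - x) X" by (auto simp: X_def)
  then have \<beta>: "snd f (map (\<lambda>v. if v = p then 1 else 0) xs) = 1 - \<alpha>"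
    unfolding \<alpha>_def using self_dualD[OF sd X] by simp
  have coords: "apply_coords 2 (bin_code a) f (map h xs)
      = map (\<lambda>i. pick (bin_code a i (h p)) (bin_code a i (h q)) \<alpha> (1 - \<alpha>)) [0..<2]" for h
    using apply_coords_two_valued[OF f2 bin_code_A2 l s] \<beta> unfolding \<alpha>_def X_def by simp
  have A': "set xs \<subseteq> A3" "set (map g xs) \<subseteq> A3" using s A by auto
  have val: "snd (c2_embedding a f) (map h xs) = h r"
    if "h r \<in> A3" "set (map h xs) \<subseteq> A3"
      and "apply_coords 2 (bin_code a) f (map h xs) = map (\<lambda>i. bin_code a i (h r)) [0..<2]" for h r
    using that l by (simp add: snd_c2_embedding bin_decode_code[OF a])
  consider "\<alpha> = 0" | "\<alpha> = 1" using \<alpha> by (auto simp: A2_iff)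
  then show ?thesis
  proof cases
    case 1
    have cs: "apply_coords 2 (bin_code a) f (map h xs) = map (\<lambda>i. bin_code a i (h p)) [0..<2]" for h
      unfolding coords 1 diff_zero by (rule map_pick_0_1[OF bin_code_A2])
    have "snd (c2_embedding a f) (map (\<lambda>v. v) xs) = p" "snd (c2_embedding a f) (map g xs) = g p"
      using val[of "\<lambda>v. v" p, OF _ _ cs] val[of g p, OF _ _ cs] A A' by simp_all
    then show ?thesis by simp
  next
    case 2
    have cs: "apply_coords 2 (bin_code a) f (map h xs) = map (\<lambda>i. bin_code a i (h q)) [0..<2]" for h
      unfolding coords 2 diff_self_eq_0 by (rule map_pick_1_0[OF bin_code_A2])
    have "snd (c2_embedding a f) (map (\<lambda>v. v) xs) = q" "snd (c2_embedding a f) (map g xs) = g q"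
      using val[of "\<lambda>v. v" q, OF _ _ cs] val[of g q, OF _ _ cs] A A' by simp_all
    then show ?thesis by simp
  qed
qed

lemma c2_embedding_conservative:
  assumes f: "f \<in> C2" and a: "a \<in> A3" and U: "U \<subseteq> A3" and l: "length xs = fst f" and s: "set xs \<subseteq> U"
  shows "snd (c2_embedding a f) xs \<in> U"
proof -
  have "xs \<noteq> []" using l ops_arity_pos[of f A2] f by (auto simp: mem_C2_iff mem_I2_iff)
  then show ?thesis
  proof (rule two_valued_or_onto_A3[OF subset_trans[OF s U]])
    assume "set xs = A3"
    then show ?thesis using ops_closed[OF c2_embedding_ops[OF f a]] l s U by auto
  next
    fix p q assume pq: "p \<in> set xs" "q \<in> set xs" "set xs \<subseteq> {p, q}"
    have "p \<in> A3" "q \<in> A3" using pq s U by auto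
    then have "(snd (c2_embedding a f) xs, snd (c2_embedding a f) (map (\<lambda>v. v) xs)) \<in> {(p, p), (q, q)}"
      using c2_embedding_two_valued[OF f a _ pq(3), of "\<lambda>v. v"] l by simp
    then show ?thesis using pq s by auto
  qed
qed

lemma c2_embedding_swap3:
  assumes f: "f \<in> C2" and a: "a \<in> A3" and l: "length xs = fst f" and s: "set xs \<subseteq> A3"
  shows "snd (c2_embedding a f) (map (swap3 a) xs) = swap3 a (snd (c2_embedding a f) xs)"
proof -
  have f2: "f \<in> I2" and sd: "self_dual f" using f by (simp_all add: mem_C2_iff)
  let ?c = "\<lambda>i. snd f (map (bin_code a i) xs)"
  have c: "?c i \<in> A2" if "i < 2" for i
    by (rule ops_closed) (use f2 l bin_code_A2[OF that] in \<open>auto simp: mem_I2_iff\<close>)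
  have "snd f (map (bin_code a i) (map (swap3 a) xs)) = 1 - ?c (1 - i)" if "i < 2" for i
  proof -
    have "snd f (map (bin_code a i) (map (swap3 a) xs)) = snd f (map (\<lambda>x. 1 - x) (map (bin_code a (1 - i)) xs))"
      unfolding map_map by (rule arg_cong[where f = "snd f"], rule map_cong) (use s bin_code_swap3[OF a _ that] in auto)
    also have "\<dots> = 1 - ?c (1 - i)"
      by (rule self_dualD[OF sd]) (use l bin_code_A2[of "1 - i"] in auto)
    finally show ?thesis .
  qed
  then have "apply_coords 2 (bin_code a) f (map (swap3 a) xs) = [1 - ?c 1, 1 - ?c 0]"
    by (simp add: apply_coords_def upt_rec)
  moreover have "apply_coords 2 (bin_code a) f xs = [?c 0, ?c 1]"
    by (simp add: apply_coords_def upt_rec)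
  moreover have "set (map (swap3 a) xs) \<subseteq> A3" using s swap3_A3[OF a] by auto
  ultimately show ?thesis
    using s l bin_decode_swap3[OF a c c] by (simp add: snd_c2_embedding)
qed

context malcev_majority_clone3
begin

lemma c2_embedding_mem:
  assumes f: "f \<in> C2"
  shows "c2_embedding swap_center f \<in> C"
proof (rule mem_C_by_inv_brel_cases)
  show "c2_embedding swap_center f \<in> ops A3" by (rule c2_embedding_ops[OF f swap_center(1)])
next
  fix U xs assume "subuniverse A3 C U" "length xs = fst (c2_embedding swap_center f)" "set xs \<subseteq> U"
  then show "snd (c2_embedding swap_center f) xs \<in> U"
    using c2_embedding_conservative[OF f swap_center(1)] by (simp add: subuniverse_def)
next
  fix p q p' q' xs
  assume "inv_brel A3 C {(p, p'), (q, q')}" and "length xs = fst (c2_embedding swap_center f)"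
    and "set xs \<subseteq> {p, q}" "p \<noteq> q"
  then show "(snd (c2_embedding swap_center f) xs,
      snd (c2_embedding swap_center f) (map (\<lambda>v. if v = p then p' else q') xs)) \<in> {(p, p'), (q, q')}"
    using c2_embedding_two_valued[OF f swap_center(1), of xs p q "\<lambda>v. if v = p then p' else q'"]
    by (auto dest: inv_brel_subset)
next
  fix a xs assume "a \<in> A3" "inv_brel A3 C (swap3_rel a)" "length xs = fst (c2_embedding swap_center f)"
    "set xs \<subseteq> A3"
  then show "snd (c2_embedding swap_center f) (map (swap3 a) xs) = swap3 a (snd (c2_embedding swap_center f) xs)"
    using c2_embedding_swap3[OF f] swap_center by auto
qed

lemma minion_hom_c2_embedding: "minion_hom A2 A3 C2 C (c2_embedding swap_center)"
  unfolding c2_embedding_def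
  by (rule minion_hom_encoded_op)
    (use bin_code_A2 c2_embedding_mem in \<open>auto simp: A2_def c2_embedding_def\<close>)

end

section \<open>A minion homomorphism from I2\<close>

definition subset_code :: "nat \<Rightarrow> nat \<Rightarrow> nat" where
  "subset_code i v = (if v \<in> [{0}, {1}, {2}, {0, 1}, {0, 2}, {1, 2}] ! i then 1 else 0)"

text \<open>The patterns recognised below are the codes of 0, 1 and 2, followed, for each pair of distinct
  elements, by the coordinatewise minimum and maximum of their codes: these are the values of an
  operation of I2 on a two-valued argument.\<close>

definition subset_decode :: "(nat \<Rightarrow> nat \<Rightarrow> nat) \<Rightarrow> nat \<Rightarrow> nat list \<Rightarrow> nat" where
  "subset_decode mid d t =
    (if t = [1, 0, 0, 1, 1, 0] then 0 else if t = [0, 1, 0, 1, 0, 1] then 1 else if t = [0, 0, 1, 0, 1, 1] then 2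
     else if t = [0, 0, 0, 1, 0, 0] \<or> t = [1, 1, 0, 1, 1, 1] then mid 0 1
     else if t = [0, 0, 0, 0, 1, 0] \<or> t = [1, 0, 1, 1, 1, 1] then mid 0 2
     else if t = [0, 0, 0, 0, 0, 1] \<or> t = [0, 1, 1, 1, 1, 1] then mid 1 2
     else d)"

definition special_patterns :: "nat list set" where
  "special_patterns = {[1, 0, 0, 1, 1, 0], [0, 1, 0, 1, 0, 1], [0, 0, 1, 0, 1, 1],
     [0, 0, 0, 1, 0, 0], [1, 1, 0, 1, 1, 1], [0, 0, 0, 0, 1, 0], [1, 0, 1, 1, 1, 1],
     [0, 0, 0, 0, 0, 1], [0, 1, 1, 1, 1, 1]}"

text \<open>\<open>subset_perm a ! i\<close> is the index of the image of the \<open>i\<close>-th subset under \<open>swap3 a\<close>.\<close>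

definition subset_perm :: "nat \<Rightarrow> nat list" where
  "subset_perm a = (if a = 0 then [0, 2, 1, 4, 3, 5] else if a = 1 then [2, 1, 0, 5, 4, 3] else [1, 0, 2, 3, 5, 4])"

definition permute_coords :: "nat \<Rightarrow> nat list \<Rightarrow> nat list" where
  "permute_coords a t = map (\<lambda>i. t ! (subset_perm a ! i)) [0..<6]"

lemma subset_code_A2: "subset_code i v \<in> A2"
  by (simp add: subset_code_def A2_def)

lemma less_6_cases: "i < 6 \<Longrightarrow> i = 0 \<or> i = 1 \<or> i = 2 \<or> i = 3 \<or> i = 4 \<or> i = (5::nat)"
  by auto

lemma upt_6: "[0..<6] = [0, 1, 2, 3, 4, 5::nat]"
  by (simp add: upt_rec)

lemma subset_decode_A3: "mid 0 1 \<in> A3 \<Longrightarrow> mid 0 2 \<in> A3 \<Longrightarrow> mid 1 2 \<in> A3 \<Longrightarrow> d \<in> A3 \<Longrightarrow> subset_decode mid d t \<in> A3"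
  by (simp add: subset_decode_def A3_def)

lemma subset_decode_code: "v \<in> A3 \<Longrightarrow> subset_decode mid d (map (\<lambda>i. subset_code i v) [0..<6]) = v"
  unfolding A3_iff upt_6 by (elim disjE) (simp_all add: subset_decode_def subset_code_def)

lemma subset_decode_pick:
  assumes "p \<noteq> q" "p \<in> A3" "q \<in> A3" "\<alpha> \<in> A2" "\<beta> \<in> A2" and sym: "\<And>x y. mid x y = mid y x"
  shows "subset_decode mid d (map (\<lambda>i. pick (subset_code i p) (subset_code i q) \<alpha> \<beta>) [0..<6])
    = (if \<alpha> = 0 \<and> \<beta> = 1 then p else if \<alpha> = 1 \<and> \<beta> = 0 then q else mid p q)"
  using assms(1-5) sym[of 1 0] sym[of 2 0] sym[of 2 1] unfolding A3_iff A2_iff upt_6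
  by (elim disjE) (simp_all add: pick_def subset_decode_def subset_code_def)

lemma subset_code_swap3:
  "a \<in> A3 \<Longrightarrow> v \<in> A3 \<Longrightarrow> i < 6 \<Longrightarrow> subset_code i (swap3 a v) = subset_code (subset_perm a ! i) v"
  unfolding A3_iff by (elim disjE; drule less_6_cases; elim disjE) (simp_all add: subset_code_def subset_perm_def swap3_def)

lemma subset_perm_less: "a \<in> A3 \<Longrightarrow> i < 6 \<Longrightarrow> subset_perm a ! i < 6"
  unfolding A3_iff by (elim disjE; drule less_6_cases; elim disjE) (simp_all add: subset_perm_def)

lemma permute_coords_eq: "permute_coords a t = [t ! (subset_perm a ! 0), t ! (subset_perm a ! 1),
  t ! (subset_perm a ! 2), t ! (subset_perm a ! 3), t ! (subset_perm a ! 4), t ! (subset_perm a ! 5)]"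
  by (simp add: permute_coords_def upt_6)

lemma permute_coords_involution:
  assumes "length t = 6" "a \<in> A3"
  shows "permute_coords a (permute_coords a t) = t"
proof -
  have "t = [t ! 0, t ! 1, t ! 2, t ! 3, t ! 4, t ! 5]"
    using assms(1) by (intro nth_equalityI) (auto dest: less_6_cases)
  then show ?thesis
    using assms(2) unfolding A3_iff by (elim disjE) (simp_all add: permute_coords_eq subset_perm_def)
qed

lemma permute_coords_special: "t \<in> special_patterns \<Longrightarrow> a \<in> A3 \<Longrightarrow> permute_coords a t \<in> special_patterns"
  unfolding A3_iff special_patterns_def
  by (elim disjE insertE emptyE) (simp_all add: permute_coords_eq subset_perm_def)

lemma subset_decode_permute:
  assumes a: "a \<in> A3" and l: "length t = 6" and d: "swap3 a d = d"
    and sym: "\<And>x y. mid x y = mid y x"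
    and mid: "\<And>x y. x \<in> A3 \<Longrightarrow> y \<in> A3 \<Longrightarrow> mid (swap3 a x) (swap3 a y) = swap3 a (mid x y)"
  shows "subset_decode mid d (permute_coords a t) = swap3 a (subset_decode mid d t)"
proof (cases "t \<in> special_patterns")
  case True
  have "mid (swap3 a 0) (swap3 a 1) = swap3 a (mid 0 1)" "mid (swap3 a 0) (swap3 a 2) = swap3 a (mid 0 2)"
    "mid (swap3 a 1) (swap3 a 2) = swap3 a (mid 1 2)"
    using mid by (simp_all add: A3_def)
  then show ?thesis
    using True a sym[of 1 0] sym[of 2 0] sym[of 2 1] unfolding A3_iff special_patterns_def
    by (elim disjE insertE emptyE)
      (simp_all add: permute_coords_eq subset_perm_def subset_decode_def swap3_def)
next
  case False
  then have "permute_coords a t \<notin> special_patterns"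
    using permute_coords_special[OF _ a] permute_coords_involution[OF l a] by metis
  then show ?thesis using False d by (simp add: subset_decode_def special_patterns_def)
qed

definition i2_embedding :: "(nat \<Rightarrow> nat \<Rightarrow> nat) \<Rightarrow> nat \<Rightarrow> nat operation \<Rightarrow> nat operation" where
  "i2_embedding mid d = encoded_op A3 6 subset_code (subset_decode mid d)"

lemma fst_i2_embedding [simp]: "fst (i2_embedding mid d f) = fst f"
  by (simp add: i2_embedding_def)

lemma snd_i2_embedding: "length xs = fst f \<Longrightarrow> set xs \<subseteq> A3 \<Longrightarrow>
  snd (i2_embedding mid d f) xs = subset_decode mid d (apply_coords 6 subset_code f xs)"
  by (simp add: i2_embedding_def snd_encoded_op)

lemma i2_embedding_two_valued:
  assumes f: "f \<in> I2" and l: "length xs = fst f" and s: "set xs \<subseteq> {p, q}" and "p \<noteq> q" "g p \<noteq> g q"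
    and A: "p \<in> A3" "q \<in> A3" "g p \<in> A3" "g q \<in> A3" and sym: "\<And>x y. mid x y = mid y x"
  shows "(snd (i2_embedding mid d f) xs, snd (i2_embedding mid d f) (map g xs))
    \<in> {(p, g p), (q, g q), (mid p q, mid (g p) (g q))}"
proof -
  define \<alpha> where "\<alpha> = snd f (map (\<lambda>v. if v = p then 0 else 1) xs)"
  define \<beta> where "\<beta> = snd f (map (\<lambda>v. if v = p then 1 else 0) xs)"
  have "\<alpha> \<in> A2" unfolding \<alpha>_def by (rule ops_closed) (use f l in \<open>auto simp: mem_I2_iff A2_def\<close>)
  have "\<beta> \<in> A2" unfolding \<beta>_def by (rule ops_closed) (use f l in \<open>auto simp: mem_I2_iff A2_def\<close>)
  have "snd (i2_embedding mid d f) (map h xs)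
      = (if \<alpha> = 0 \<and> \<beta> = 1 then h p else if \<alpha> = 1 \<and> \<beta> = 0 then h q else mid (h p) (h q))"
    if "h p \<noteq> h q" "h p \<in> A3" "h q \<in> A3" for h
  proof -
    have "set (map h xs) \<subseteq> A3" using s that by auto
    then show ?thesis
      using apply_coords_two_valued[OF f _ l s, of 6 subset_code h] subset_code_A2
        subset_decode_pick[OF that \<open>\<alpha> \<in> A2\<close> \<open>\<beta> \<in> A2\<close> sym] l
      by (simp add: snd_i2_embedding \<alpha>_def \<beta>_def)
  qed
  from this[of "\<lambda>v. v"] this[of g] show ?thesis using assms by auto
qed

lemma i2_embedding_constant:
  assumes f: "f \<in> I2" and l: "length xs = fst f" and s: "set xs \<subseteq> {p}" and p: "p \<in> A3"
  shows "snd (i2_embedding mid d f) xs = p"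
proof -
  have "xs = replicate (fst f) p" using l s by (auto intro: replicate_eqI)
  moreover have "snd f (replicate (fst f) (subset_code i p)) = subset_code i p" for i
    using f subset_code_A2[of i p] by (auto simp: mem_I2_iff A2_iff)
  ultimately have "apply_coords 6 subset_code f xs = map (\<lambda>i. subset_code i p) [0..<6]"
    by (simp add: apply_coords_def)
  moreover have "set xs \<subseteq> A3" using s p by auto
  ultimately show ?thesis using l subset_decode_code[OF p] by (simp add: snd_i2_embedding)
qed

lemma i2_embedding_swap3:
  assumes f: "f \<in> I2" and a: "a \<in> A3" and l: "length xs = fst f" and s: "set xs \<subseteq> A3"
    and d: "swap3 a d = d" and sym: "\<And>x y. mid x y = mid y x"
    and mid: "\<And>x y. x \<in> A3 \<Longrightarrow> y \<in> A3 \<Longrightarrow> mid (swap3 a x) (swap3 a y) = swap3 a (mid x y)"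
  shows "snd (i2_embedding mid d f) (map (swap3 a) xs) = swap3 a (snd (i2_embedding mid d f) xs)"
proof -
  have "apply_coords 6 subset_code f (map (swap3 a) xs) = permute_coords a (apply_coords 6 subset_code f xs)"
  proof (rule nth_equalityI)
    fix i assume "i < length (apply_coords 6 subset_code f (map (swap3 a) xs))"
    then have i: "i < 6" by simp
    have "snd f (map (subset_code i) (map (swap3 a) xs)) = snd f (map (subset_code (subset_perm a ! i)) xs)"
      unfolding map_map by (rule arg_cong[where f = "snd f"], rule map_cong) (use s subset_code_swap3[OF a _ i] in auto)
    then show "apply_coords 6 subset_code f (map (swap3 a) xs) ! i
      = permute_coords a (apply_coords 6 subset_code f xs) ! i"
      using i subset_perm_less[OF a i] by (simp add: permute_coords_def)
  qed (simp add: permute_coords_def)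
  moreover have "set (map (swap3 a) xs) \<subseteq> A3" using s swap3_A3[OF a] by auto
  ultimately show ?thesis
    using subset_decode_permute[of a "apply_coords 6 subset_code f xs" d mid, OF a _ d sym mid] l s
    by (simp add: snd_i2_embedding)
qed

definition twist_comp :: "'a set \<Rightarrow> 'a operation \<Rightarrow> 'a operation \<Rightarrow> 'a operation" where
  "twist_comp A v w = comp_op A v 2 (\<lambda>i. if i = 0 then w else minor A w 2 (\<lambda>j. 1 - j))"

lemma twist_comp_mem:
  assumes "clone A C" "v \<in> C" "fst v = 2" "w \<in> C" "fst w = 2"
  shows "twist_comp A v w \<in> C" "fst (twist_comp A v w) = 2"
proof -
  have "minor A w 2 (\<lambda>j. 1 - j) \<in> C" using clone_minor[OF assms(1,4)] assms(5) by simp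
  then show "twist_comp A v w \<in> C"
    unfolding twist_comp_def using assms by (intro clone_comp) auto
qed (simp add: twist_comp_def)

lemma snd_twist_comp:
  assumes "fst v = 2" "fst w = 2" "x \<in> A" "y \<in> A"
  shows "snd (twist_comp A v w) [x, y] = snd v [snd w [x, y], snd w [y, x]]"
  using assms by (simp add: twist_comp_def snd_comp_op snd_minor upt_rec)

context malcev_majority_clone3
begin

definition pair_commutative :: "nat operation \<Rightarrow> bool" where
  "pair_commutative w \<longleftrightarrow> w \<in> C \<and> fst w = 2 \<and> (\<forall>p q. subuniverse A3 C {p, q} \<longrightarrow> snd w [p, q] = snd w [q, p])"

lemma pair_commutativeD: "pair_commutative w \<Longrightarrow> w \<in> C" "pair_commutative w \<Longrightarrow> fst w = 2"
  by (simp_all add: pair_commutative_def)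

lemma commuting_pair_witness:
  assumes pq: "p \<noteq> q" and not_inv: "\<not> inv_brel A3 C {(p, q), (q, p)}"
  shows "\<exists>u\<in>C. fst u = 2 \<and> (subuniverse A3 C {p, q} \<longrightarrow> snd u [p, q] = snd u [q, p])"
proof (cases "subuniverse A3 C {p, q}")
  case False
  then show ?thesis using clone_proj[OF clone, of 2 0] by (intro bexI[of _ "proj A3 2 0"]) auto
next
  case U: True
  have A: "p \<in> A3" "q \<in> A3" using U by (auto simp: subuniverse_def)
  then obtain c xs ys where c: "c \<in> C" and l: "length xs = fst c"
    and col: "list_all2 (\<lambda>x y. (x, y) \<in> {(p, q), (q, p)}) xs ys"
    and out: "(snd c xs, snd c ys) \<notin> {(p, q), (q, p)}"
    using not_inv unfolding inv_brel_def preserves_brel_def by blast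
  have s: "set xs \<subseteq> {p, q}" "set ys \<subseteq> {p, q}" and "length ys = fst c"
    using list_all2_set_Domain_Range[OF col] list_all2_lengthD[OF col] l by auto
  then have "snd c xs \<in> {p, q}" "snd c ys \<in> {p, q}" using subuniverseD[OF U c] l by auto
  then have eq: "snd c xs = snd c ys" using out by auto
  have ys: "ys = map (\<lambda>v. if v = p then q else p) xs" by (rule list_all2_graph[OF col]) (use pq in auto)
  define u where "u = minor A3 c 2 (\<lambda>j. if xs ! j = p then 0 else 1)"
  have "u \<in> C" unfolding u_def by (rule clone_minor[OF clone c]) auto
  moreover have "[p, q] ! (if xs ! j = p then 0 else 1) = xs ! j \<and> [q, p] ! (if xs ! j = p then 0 else 1) = ys ! j"
    if "j < fst c" for j
  proof -
    have "xs ! j \<in> {p, q}" using subsetD[OF s(1) nth_mem[of j xs]] l that by simp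
    then show ?thesis using l that pq unfolding ys by auto
  qed
  then have "map (\<lambda>j. [p, q] ! (if xs ! j = p then 0 else 1)) [0..<fst c] = xs"
    "map (\<lambda>j. [q, p] ! (if xs ! j = p then 0 else 1)) [0..<fst c] = ys"
    using l \<open>length ys = fst c\<close> by (auto intro!: nth_equalityI)
  ultimately show ?thesis using A eq U by (intro bexI[of _ u]) (auto simp: u_def snd_minor)
qed

lemma twist_comp_commutes:
  assumes v: "v \<in> C" "fst v = 2" and w: "w \<in> C" "fst w = 2" and U: "subuniverse A3 C {p, q}"
    and comm: "snd v [p, q] = snd v [q, p] \<or> snd w [p, q] = snd w [q, p]"
  shows "snd (twist_comp A3 v w) [p, q] = snd (twist_comp A3 v w) [q, p]"
proof -
  have A: "p \<in> A3" "q \<in> A3" using U by (auto simp: subuniverse_def)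
  have "snd w [p, q] \<in> {p, q}" "snd w [q, p] \<in> {p, q}" using subuniverseD[OF U w(1)] w(2) by auto
  then show ?thesis using comm A by (auto simp: snd_twist_comp v(2) w(2))
qed

lemma commuting_binary_op_exists:
  assumes no_swap: "\<And>p q. p \<noteq> q \<Longrightarrow> \<not> inv_brel A3 C {(p, q), (q, p)}"
  obtains w where "pair_commutative w"
proof -
  note witness = commuting_pair_witness[OF _ no_swap]
  obtain u01 u02 u12 where u: "u01 \<in> C" "fst u01 = 2" "u02 \<in> C" "fst u02 = 2" "u12 \<in> C" "fst u12 = 2"
    and c01: "subuniverse A3 C {0, 1} \<longrightarrow> snd u01 [0, 1] = snd u01 [1, 0]"
    and c02: "subuniverse A3 C {0, 2} \<longrightarrow> snd u02 [0, 2] = snd u02 [2, 0]"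
    and c12: "subuniverse A3 C {1, 2} \<longrightarrow> snd u12 [1, 2] = snd u12 [2, 1]"
    using witness[of 0 1] witness[of 0 2] witness[of 1 2] by auto
  define v where "v = twist_comp A3 u01 u02"
  define w where "w = twist_comp A3 v u12"
  have v: "v \<in> C" "fst v = 2" unfolding v_def using twist_comp_mem[OF clone u(1-4)] by auto
  have w: "w \<in> C" "fst w = 2" unfolding w_def using twist_comp_mem[OF clone v u(5,6)] by auto
  have w01: "snd w [0, 1] = snd w [1, 0]" if U: "subuniverse A3 C {0, 1}"
  proof -
    have "snd v [0, 1] = snd v [1, 0]" unfolding v_def using twist_comp_commutes[OF u(1-4) U] c01 U by blast
    then show ?thesis unfolding w_def using twist_comp_commutes[OF v u(5,6) U] by blast
  qed
  have w02: "snd w [0, 2] = snd w [2, 0]" if U: "subuniverse A3 C {0, 2}"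
  proof -
    have "snd v [0, 2] = snd v [2, 0]" unfolding v_def using twist_comp_commutes[OF u(1-4) U] c02 U by blast
    then show ?thesis unfolding w_def using twist_comp_commutes[OF v u(5,6) U] by blast
  qed
  have w12: "snd w [1, 2] = snd w [2, 1]" if U: "subuniverse A3 C {1, 2}"
    unfolding w_def using twist_comp_commutes[OF v u(5,6) U] c12 U by blast
  have "snd w [p, q] = snd w [q, p]" if U: "subuniverse A3 C {p, q}" for p q
  proof -
    have "p \<in> A3" "q \<in> A3" using U by (auto simp: subuniverse_def)
    then show ?thesis using U w01 w02 w12 unfolding A3_iff by (elim disjE) (simp_all add: insert_commute)
  qed
  then have "pair_commutative w" unfolding pair_commutative_def using w by blast
  then show ?thesis by (rule that)
qed

definition comm_value :: "nat operation \<Rightarrow> nat \<Rightarrow> nat \<Rightarrow> nat" where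
  "comm_value w p q = (if subuniverse A3 C {p, q} then snd w [p, q] else swap_center)"

lemma comm_value_sym: "pair_commutative w \<Longrightarrow> comm_value w p q = comm_value w q p"
  by (simp add: comm_value_def pair_commutative_def insert_commute)

lemma comm_value_A3: "w \<in> C \<Longrightarrow> fst w = 2 \<Longrightarrow> comm_value w p q \<in> A3"
  using clone_closed[OF clone, of w "[p, q]"] swap_center(1) by (auto simp: comm_value_def subuniverse_def)

lemma comm_value_mem: "w \<in> C \<Longrightarrow> fst w = 2 \<Longrightarrow> subuniverse A3 C {p, q} \<Longrightarrow> comm_value w p q \<in> {p, q}"
  using subuniverseD[of A3 C "{p, q}" w "[p, q]"] by (simp add: comm_value_def)

lemma comm_value_swap3:
  assumes w: "w \<in> C" "fst w = 2" and a: "a \<in> A3" and swap: "inv_brel A3 C (swap3_rel a)"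
    and pq: "p \<in> A3" "q \<in> A3"
  shows "comm_value w (swap3 a p) (swap3 a q) = swap3 a (comm_value w p q)"
proof -
  have image: "swap3_rel a `` {x, y} = {swap3 a x, swap3 a y}" if "x \<in> A3" "y \<in> A3" for x y
    using that by (auto simp: mem_swap3_rel)
  have involution: "swap3 a (swap3 a x) = x" if "x \<in> A3" for x
    using that a unfolding A3_iff by (auto simp: swap3_def)
  have "subuniverse A3 C {swap3 a p, swap3 a q} \<longleftrightarrow> subuniverse A3 C {p, q}"
  proof
    assume "subuniverse A3 C {swap3 a p, swap3 a q}"
    then have "subuniverse A3 C (swap3_rel a `` {swap3 a p, swap3 a q})"
      by (rule subuniverse_Image[OF clone _ swap])
    then show "subuniverse A3 C {p, q}"
      using image[OF swap3_A3[OF a pq(1)] swap3_A3[OF a pq(2)]] involution pq by simp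
  next
    assume "subuniverse A3 C {p, q}"
    then have "subuniverse A3 C (swap3_rel a `` {p, q})" by (rule subuniverse_Image[OF clone _ swap])
    then show "subuniverse A3 C {swap3 a p, swap3 a q}" using image[OF pq] by simp
  qed
  moreover have "(snd w [p, q], snd w [swap3 a p, swap3 a q]) \<in> swap3_rel a"
    by (rule inv_brelD[OF swap w(1)]) (use w(2) pq in \<open>simp_all add: mem_swap3_rel\<close>)
  moreover have "a = swap_center" using swap_center(2)[OF a swap] .
  ultimately show ?thesis by (auto simp: comm_value_def mem_swap3_rel swap3_def)
qed

lemma i2_embedding_ops: "w \<in> C \<Longrightarrow> fst w = 2 \<Longrightarrow> f \<in> I2 \<Longrightarrow> i2_embedding (comm_value w) swap_center f \<in> ops A3"
  unfolding i2_embedding_def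
  by (rule encoded_op_ops) (use subset_code_A2 subset_decode_A3 comm_value_A3 swap_center(1) in \<open>auto simp: mem_I2_iff\<close>)

lemma i2_embedding_subuniverse:
  assumes w: "pair_commutative w" and f: "f \<in> I2" and U: "subuniverse A3 C U"
    and l: "length xs = fst f" and s: "set xs \<subseteq> U"
  shows "snd (i2_embedding (comm_value w) swap_center f) xs \<in> U"
proof -
  let ?g = "i2_embedding (comm_value w) swap_center f"
  note wC = pair_commutativeD[OF w]
  have sym: "comm_value w x y = comm_value w y x" for x y using comm_value_sym[OF w] .
  have UA: "U \<subseteq> A3" using U by (simp add: subuniverse_def)
  have "xs \<noteq> []" using l ops_arity_pos[of f A2] f by (auto simp: mem_I2_iff)
  then show ?thesis
  proof (rule two_valued_or_onto_A3[OF subset_trans[OF s UA]])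
    assume "set xs = A3"
    then show ?thesis using ops_closed[OF i2_embedding_ops[OF wC f]] l s UA by auto
  next
    fix p q assume pq: "p \<in> set xs" "q \<in> set xs" "set xs \<subseteq> {p, q}"
    have A: "p \<in> A3" "q \<in> A3" "p \<in> U" "q \<in> U" using pq s UA by auto
    show ?thesis
    proof (cases "p = q")
      case True
      then show ?thesis using i2_embedding_constant[OF f l _ A(1)] pq A by simp
    next
      case False
      have "(snd ?g xs, snd ?g (map (\<lambda>v. v) xs)) \<in> {(p, p), (q, q), (comm_value w p q, comm_value w p q)}"
        using i2_embedding_two_valued[OF f l pq(3) False False A(1,2) A(1,2) sym] by simp
      moreover have "comm_value w p q \<in> U"
      proof (cases "U = A3")
        case False
        then have "U = {p, q}" using subset_A3_eq_pair[OF UA False A(3,4)] \<open>p \<noteq> q\<close> by blast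
        then show ?thesis using comm_value_mem[OF wC] U by simp
      qed (use comm_value_A3[OF wC] in simp)
      ultimately show ?thesis using A by auto
    qed
  qed
qed

lemma i2_embedding_matching:
  assumes w: "pair_commutative w" and f: "f \<in> I2" and pq: "p \<noteq> q" "p' \<noteq> q'"
    and R: "inv_brel A3 C {(p, p'), (q, q')}" and l: "length xs = fst f" and s: "set xs \<subseteq> {p, q}"
  shows "(snd (i2_embedding (comm_value w) swap_center f) xs,
    snd (i2_embedding (comm_value w) swap_center f) (map (\<lambda>v. if v = p then p' else q') xs)) \<in> {(p, p'), (q, q')}"
proof -
  let ?g = "i2_embedding (comm_value w) swap_center f" and ?h = "\<lambda>v. if v = p then p' else q'"
  note wC = pair_commutativeD[OF w]
  have sym: "comm_value w x y = comm_value w y x" for x y using comm_value_sym[OF w] .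
  have A: "p \<in> A3" "q \<in> A3" "p' \<in> A3" "q' \<in> A3" using inv_brel_subset[OF R] by auto
  have "subuniverse A3 C {p, q}" "subuniverse A3 C {p', q'}"
    using subuniverse_Domain[OF R] subuniverse_Range[OF R] by simp_all
  moreover have "(snd w [p, q], snd w [p', q']) \<in> {(p, p'), (q, q')}"
    by (rule inv_brelD[OF R wC(1)]) (simp_all add: wC(2))
  ultimately have "(comm_value w p q, comm_value w p' q') \<in> {(p, p'), (q, q')}"
    by (simp add: comm_value_def)
  moreover have "(snd ?g xs, snd ?g (map ?h xs)) \<in> {(p, ?h p), (q, ?h q), (comm_value w p q, comm_value w (?h p) (?h q))}"
    by (rule i2_embedding_two_valued[OF f l s pq(1)]) (use pq A sym in auto)
  ultimately show ?thesis using pq by auto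
qed

lemma i2_embedding_swap3_rel:
  assumes w: "pair_commutative w" and f: "f \<in> I2" and a: "a \<in> A3" and swap: "inv_brel A3 C (swap3_rel a)"
    and l: "length xs = fst f" and s: "set xs \<subseteq> A3"
  shows "snd (i2_embedding (comm_value w) swap_center f) (map (swap3 a) xs)
    = swap3 a (snd (i2_embedding (comm_value w) swap_center f) xs)"
proof -
  have sym: "comm_value w x y = comm_value w y x" for x y using comm_value_sym[OF w] .
  have "swap3 a swap_center = swap_center" using swap_center(2)[OF a swap] by (simp add: swap3_def)
  then show ?thesis
    using i2_embedding_swap3[of f a xs swap_center "comm_value w", OF f a l s _ sym]
      comm_value_swap3[OF pair_commutativeD[OF w] a swap] by simp
qed

lemma i2_embedding_mem:
  assumes w: "pair_commutative w" and f: "f \<in> I2"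
  shows "i2_embedding (comm_value w) swap_center f \<in> C"
  by (rule mem_C_by_inv_brel_cases[OF i2_embedding_ops[OF pair_commutativeD[OF w] f]])
    (use i2_embedding_subuniverse[OF w f] i2_embedding_matching[OF w f] i2_embedding_swap3_rel[OF w f] in simp_all)

lemma minion_hom_i2_embedding:
  assumes "pair_commutative w"
  shows "minion_hom A2 A3 I2 C (i2_embedding (comm_value w) swap_center)"
  unfolding i2_embedding_def
  by (rule minion_hom_encoded_op)
    (use subset_code_A2 i2_embedding_mem[OF assms] in \<open>auto simp: A2_def i2_embedding_def\<close>)

end

theorem lemma6p2:
  fixes C :: "nat operation set"
  assumes "clone A3 C"
    and "idempotent_clone A3 C"
    and "malcev_clone A3 C"
    and "has_majority A3 C"
    and "\<not> clone_preserves C (mu 0)"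
    and "\<not> clone_preserves C (mu 1)"
    and "\<not> clone_preserves C (mu 2)"
    and "\<not> clone_preserves C phi"
  shows "minion_equiv A3 A2 C C2 \<or> minion_equiv A3 A2 C I2"
proof -
  interpret malcev_majority_clone3 C
    using assms by unfold_locales (auto simp: A3_iff)
  show ?thesis
  proof (cases "\<exists>p q. p \<noteq> q \<and> inv_brel A3 C {(p, q), (q, p)}")
    case True
    then obtain p q where pq: "p \<noteq> q" and swap: "inv_brel A3 C {(p, q), (q, p)}" by blast
    have "p \<in> A3" "q \<in> A3" using inv_brel_subset[OF swap] by auto
    then have "minion_hom A3 A2 C C2 (bool_restriction p q)"
      using minion_hom_bool_restriction_C2[OF clone idempotent _ _ pq swap] by blast
    then show ?thesis using minion_hom_c2_embedding unfolding minion_equiv_def by blast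
  next
    case False
    then obtain w where "pair_commutative w" using commuting_binary_op_exists by blast
    then have "minion_hom A2 A3 I2 C (i2_embedding (comm_value w) swap_center)"
      by (rule minion_hom_i2_embedding)
    moreover have "minion_hom A3 A2 C I2 (bool_restriction 0 1)"
      by (rule minion_hom_bool_restriction_I2[OF clone idempotent]) (auto simp: A3_def)
    ultimately show ?thesis unfolding minion_equiv_def by blast
  qed
qed

end
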